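(* Let $D>0$, $a\in\mathbb{R}$, $g>0$, $r_{\rm g}>0$, $l_{\rm c}>0$, $c_\infty>0$, $\tilde a,\beta\in\mathbb{R}$, $l_{\rm s}>0$, $\gamma>0$ with $\gamma\ge a/D$, and $\bar l>l_{\rm s}$. Let $A,B,C,K,\phi$ be as in the context, and consider a solution $(w(\cdot,t),X(t))$, $X=[z_1\ z_2]^\top$, $l(t)=l_{\rm s}+z_2(t)$, of the target system $$w_t=Dw_{xx}-aw_x-gw-\dot l(t)F(x,X(t)),\quad 0<x<l(t),$$ $$w_x(0,t)=\gamma w(0,t),\quad w(l(t),t)=0,\quad \dot X=(A+BK^\top)X+Bw_x(l(t),t),$$ where $F(x,X)=\big(\phi'(x-l(t))^\top-k(x,l(t))C^\top\big)X$ and $k(x,y)=-\frac1D\phi(x-y)^\top B$. Let $P,Q$ be positive definite with $(A+BK^\top)^\top P+P(A+BK^\top)=-Q$, and define $$V=\frac{d_1}{2}\int_0^{l(t)}w^2dx+\frac12\int_0^{l(t)}w_x^2dx+\frac{\gamma}{2}w(0,t)^2+d_2X^\top PX,\qquad d_1,d_2>0.$$ Assume that for all $t\ge0$, $0<l(t)\le\bar l$ and $|\dot l(t)|\le\bar v$ with $\bar v=\min\{\frac{g}{4\gamma},\frac{D}{8\bar l}\}$. Then for sufficiently large $d_1>0$ and sufficiently small $d_2>0$ there exists a constant $\beta_0>0$ such that for all $t\ge0$ $$\dot V\le-\alpha V+\beta_0V^{3/2},\qquad \alpha=\min\Big\{2g+\frac{D}{4\bar l},\ \frac{4g+d_1D}{2},\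 \frac{\lambda_{\min}(Q)}{2\lambda_{\max}(P)},\ \frac{d_2(2d_1D+g)}{4}\Big\}.$$
   Context: $A=\begin{bmatrix}\tilde a&0\\ r_{\rm g}&0\end{bmatrix}$, $B=[-\beta\ \ 0]^\top$, $C=[1\ \ -\frac{(a-gl_{\rm c})c_\infty}{D}]^\top$; $K\in\mathbb{R}^2$ is chosen so that $A+BK^\top$ is Hurwitz. $N_1=\begin{bmatrix}0&\frac1D(gI+A+\frac aD BC^\top)\\ I&\frac1D(BC^\top+aI)\end{bmatrix}$ and $\phi(x)^\top=[C^\top\ \ K^\top-\frac1D C^\top BC^\top]e^{N_1x}\begin{bmatrix}I\\0\end{bmatrix}\in\mathbb{R}^{1\times2}$. $\lambda_{\min},\lambda_{\max}$ denote smallest/largest eigenvalues. The system describes (after a backstepping transformation) the error dynamics of tubulin concentration in a growing axon of length $l(t)$ with desired length $l_{\rm s}$; note $\dot l(t)=r_{\rm g}z_1(t)$. The constant called $\beta_0$ here is denoted $\beta$ in the paper (distinct from the model constant $\beta$ in $B$). *)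

theory Defs
  imports "HOL-Analysis.Analysis"
begin

primrec mpow :: "'a::comm_ring_1^'n^'n \<Rightarrow> nat \<Rightarrow> 'a^'n^'n" where
  "mpow M 0 = mat 1"
| "mpow M (Suc k) = M ** mpow M k"

definition mat_exp :: "real^'n^'n \<Rightarrow> real^'n^'n" where
  "mat_exp M = (\<Sum>k. (1 / fact k) *\<^sub>R mpow M k)"

definition hurwitz :: "real^'n^'n \<Rightarrow> bool" where
  "hurwitz M \<longleftrightarrow> (\<forall>s::complex. det (mat s - (\<chi> i j. complex_of_real (M $ i $ j))) = 0 \<longrightarrow> Re s < 0)"

definition pos_def :: "real^'n^'n \<Rightarrow> bool" where
  "pos_def M \<longleftrightarrow> transpose M = M \<and> (\<forall>x. x \<noteq> 0 \<longrightarrow> x \<bullet> (M *v x) > 0)"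

definition real_eigenvalues :: "real^'n^'n \<Rightarrow> real set" where
  "real_eigenvalues M = {s. \<exists>v. v \<noteq> 0 \<and> M *v v = s *\<^sub>R v}"

definition lambda_min :: "real^'n^'n \<Rightarrow> real" where
  "lambda_min M = Min (real_eigenvalues M)"

definition lambda_max :: "real^'n^'n \<Rightarrow> real" where
  "lambda_max M = Max (real_eigenvalues M)"

definition Amat :: "real \<Rightarrow> real \<Rightarrow> real^2^2" where
  "Amat atil rg = vector [vector [atil, 0], vector [rg, 0]]"

definition Bvec :: "real \<Rightarrow> real^2" where
  "Bvec beta = vector [- beta, 0]"

definition Cvec :: "real \<Rightarrow> real \<Rightarrow> real \<Rightarrow> real \<Rightarrow> real \<Rightarrow> real^2" where
  "Cvec D a g lc cinf = vector [1, - ((a - g * lc) * cinf / D)]"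

definition outer :: "real^2 \<Rightarrow> real^2 \<Rightarrow> real^2^2" where
  "outer u v = (\<chi> i j. u $ i * v $ j)"

definition block :: "real^2^2 \<Rightarrow> real^2^2 \<Rightarrow> real^2^2 \<Rightarrow> real^2^2 \<Rightarrow> real^(2+2)^(2+2)" where
  "block M11 M12 M21 M22 = (\<chi> i j. case (i, j) of
      (Inl p, Inl q) \<Rightarrow> M11 $ p $ q
    | (Inl p, Inr q) \<Rightarrow> M12 $ p $ q
    | (Inr p, Inl q) \<Rightarrow> M21 $ p $ q
    | (Inr p, Inr q) \<Rightarrow> M22 $ p $ q)"

definition N1 :: "real \<Rightarrow> real \<Rightarrow> real \<Rightarrow> real^2^2 \<Rightarrow> real^2 \<Rightarrow> real^2 \<Rightarrow> real^(2+2)^(2+2)" where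
  "N1 D a g A B C = block 0 ((1 / D) *\<^sub>R (g *\<^sub>R mat 1 + A + (a / D) *\<^sub>R outer B C))
                           (mat 1) ((1 / D) *\<^sub>R (outer B C + a *\<^sub>R mat 1))"

text \<open>phi(x)^T = [C^T, K^T - (1/D) C^T B C^T] e^{N_1 x} [I; 0], as a vector in R^2.\<close>
definition phi :: "real \<Rightarrow> real \<Rightarrow> real \<Rightarrow> real^2^2 \<Rightarrow> real^2 \<Rightarrow> real^2 \<Rightarrow> real^2 \<Rightarrow> real \<Rightarrow> real^2" where
  "phi D a g A B C K x =
     (let r = (\<chi> i::2+2. case i of Inl p \<Rightarrow> C $ p | Inr p \<Rightarrow> K $ p - (1 / D) * (C \<bullet> B) * C $ p);
          E = mat_exp (x *\<^sub>R N1 D a g A B C)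
      in (\<chi> j. \<Sum>i\<in>UNIV. r $ i * E $ i $ Inl j))"

definition kker :: "real \<Rightarrow> real \<Rightarrow> real \<Rightarrow> real^2^2 \<Rightarrow> real^2 \<Rightarrow> real^2 \<Rightarrow> real^2 \<Rightarrow> real \<Rightarrow> real \<Rightarrow> real" where
  "kker D a g A B C K x y = - (1 / D) * (phi D a g A B C K (x - y) \<bullet> B)"

definition Ffun :: "real \<Rightarrow> real \<Rightarrow> real \<Rightarrow> real^2^2 \<Rightarrow> real^2 \<Rightarrow> real^2 \<Rightarrow> real^2 \<Rightarrow> real \<Rightarrow> real \<Rightarrow> real^2 \<Rightarrow> real" where
  "Ffun D a g A B C K l x X =
     vector_derivative (phi D a g A B C K) (at (x - l)) \<bullet> X - kker D a g A B C K x l * (C \<bullet> X)"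

end

theory Submission
  imports Defs
begin

text \<open>
  The moving-boundary Leibniz rule differentiates the
  two \<open>L\<^sup>2\<close> integrals; substituting the PDE and integrating by parts, with \<open>w(l,t) = 0\<close>,
  \<open>w\<^sub>x(0,t) = \<gamma> w(0,t)\<close> and \<open>w\<^sub>t(l,t) = - l' w\<^sub>x(l,t)\<close> (from differentiating the boundary
  condition along the moving boundary), writes \<open>V'\<close> as dissipation terms, a boundary term in
  \<open>w\<^sub>x(l,t)\<close>, and perturbation terms carrying the factor \<open>l' = r\<^sub>g z\<^sub>1\<close>.

  The perturbation \<open>F(x,X)\<close> is at most \<open>c\<^sub>F |X|\<close> because \<open>\<phi>\<close> and \<open>\<phi>'\<close> are continuous
  (the matrix exponential is an everywhere convergent power series), and \<open>|l'| \<le> r\<^sub>g |X|\<close>, so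
  the perturbation terms are cubic, \<open>O(|X| (|X|\<^sup>2 + \<parallel>w\<parallel>\<^sup>2))\<close>, and become \<open>O(V powr (3/2))\<close>.
  The boundary term is controlled by the trace inequality
  \<open>w\<^sub>x(l)\<^sup>2 \<le> \<gamma>\<^sup>2 w(0)\<^sup>2 + \<parallel>w\<^sub>x\<parallel>\<^sup>2/\<epsilon> + \<epsilon> \<parallel>w\<^sub>x\<^sub>x\<parallel>\<^sup>2\<close>, whose cost is paid by taking \<open>d\<^sub>1\<close> large,
  and its coupling to \<open>X\<close> by Young's inequality and the Lyapunov equation for \<open>d\<^sub>2 \<le> 1\<close>.
  For small \<open>d\<^sub>2\<close> the remaining dissipation dominates \<open>d\<^sub>2 (2 d\<^sub>1 D + g)/4 \<cdot> V\<close>, the last entry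
  of the minimum defining \<open>\<alpha>\<close>.
\<close>

section \<open>Regularity of the kernel \<open>\<phi>\<close>\<close>

lemma mpow_scaleR: "mpow (c *\<^sub>R M) n = (c ^ n) *\<^sub>R mpow (M::real^'n^'n) n"
  by (induction n) (simp_all add: vec_eq_iff matrix_matrix_mult_def sum_distrib_left algebra_simps)

lemma abs_mpow_entry_le:
  fixes M :: "real^'n^'n"
  shows "\<bar>mpow M n $ i $ k\<bar> \<le> (\<Sum>i\<in>UNIV. \<Sum>j\<in>UNIV. \<bar>M $ i $ j\<bar>) ^ n"
proof (induction n arbitrary: i k)
  case 0
  then show ?case by (simp add: mat_def)
next
  case (Suc n)
  define m where "m = (\<Sum>i\<in>UNIV. \<Sum>j\<in>UNIV. \<bar>M $ i $ j\<bar>)"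
  have row: "(\<Sum>j\<in>UNIV. \<bar>M $ i $ j\<bar>) \<le> m"
    unfolding m_def by (rule member_le_sum) (auto intro: sum_nonneg)
  have "\<bar>mpow M (Suc n) $ i $ k\<bar> \<le> (\<Sum>j\<in>UNIV. \<bar>M $ i $ j\<bar> * \<bar>mpow M n $ j $ k\<bar>)"
    by (simp add: matrix_matrix_mult_def abs_mult[symmetric])
  also have "\<dots> \<le> (\<Sum>j\<in>UNIV. \<bar>M $ i $ j\<bar> * m ^ n)"
    using Suc.IH by (intro sum_mono mult_left_mono) (auto simp: m_def)
  also have "\<dots> \<le> m * m ^ n"
    using row by (simp add: sum_distrib_right[symmetric] mult_right_mono m_def sum_nonneg)
  finally show ?case by (simp add: m_def)
qed

lemma summable_mat_exp_entry_series:
  fixes M :: "real^'n^'n"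
  shows "summable (\<lambda>n. mpow M n $ i $ k / fact n * y ^ n)"
proof (rule summable_rabs_cancel, rule summable_rabs_comparison_test)
  define m where "m = (\<Sum>i\<in>UNIV. \<Sum>j\<in>UNIV. \<bar>M $ i $ j\<bar>)"
  show "summable (\<lambda>n. inverse (fact n) * (m * \<bar>y\<bar>) ^ n)"
    by (rule summable_exp)
  have "\<bar>mpow M n $ i $ k / fact n * y ^ n\<bar> \<le> inverse (fact n) * (m * \<bar>y\<bar>) ^ n" for n
    using abs_mpow_entry_le[of M n i k]
    by (auto simp: m_def abs_mult power_abs power_mult_distrib divide_inverse mult_ac
        intro!: mult_left_mono)
  then show "\<exists>N. \<forall>n\<ge>N. \<bar>mpow M n $ i $ k / fact n * y ^ n\<bar> \<le> inverse (fact n) * (m * \<bar>y\<bar>) ^ n"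
    by auto
qed

lemma mat_exp_scaleR_entry:
  fixes M :: "real^'n^'n"
  shows "mat_exp (y *\<^sub>R M) $ i $ k = (\<Sum>n. mpow M n $ i $ k / fact n * y ^ n)"
proof -
  define S :: "real^'n^'n" where "S = (\<chi> i k. \<Sum>n. mpow M n $ i $ k / fact n * y ^ n)"
  have "(\<lambda>n. (1 / fact n) *\<^sub>R mpow (y *\<^sub>R M) n) sums S"
    unfolding sums_def
  proof (intro vec_tendstoI)
    fix i k
    have "(\<lambda>n. mpow M n $ i $ k / fact n * y ^ n) sums (S $ i $ k)"
      unfolding S_def using summable_sums[OF summable_mat_exp_entry_series] by simp
    then show "((\<lambda>N. (\<Sum>n<N. (1 / fact n) *\<^sub>R mpow (y *\<^sub>R M) n) $ i $ k) \<longlonglongrightarrow> S $ i $ k)"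
      by (simp add: sums_def mpow_scaleR ac_simps)
  qed
  then have "mat_exp (y *\<^sub>R M) = S"
    unfolding mat_exp_def by (rule sums_unique[symmetric])
  then show ?thesis
    by (simp add: S_def)
qed

lemma mat_exp_scaleR_entry_has_derivative:
  fixes M :: "real^'n^'n" and i k :: 'n
  defines "c \<equiv> \<lambda>n. mpow M n $ i $ k / fact n"
  shows "((\<lambda>y. mat_exp (y *\<^sub>R M) $ i $ k) has_real_derivative (\<Sum>n. diffs c n * y ^ n)) (at y)"
    and "continuous_on S (\<lambda>y. \<Sum>n. diffs c n * y ^ n)"
proof -
  have c: "summable (\<lambda>n. c n * y ^ n)" for y
    unfolding c_def by (rule summable_mat_exp_entry_series)
  show "((\<lambda>y. mat_exp (y *\<^sub>R M) $ i $ k) has_real_derivative (\<Sum>n. diffs c n * y ^ n)) (at y)"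
    unfolding mat_exp_scaleR_entry using termdiffs_strong_converges_everywhere[OF c]
    by (simp add: c_def)
  show "continuous_on S (\<lambda>y. \<Sum>n. diffs c n * y ^ n)"
    by (intro continuous_at_imp_continuous_on ballI isCont_powser_converges_everywhere
        termdiff_converges_all c)
qed

lemma has_vector_derivative_vec_lambda:
  fixes f f' :: "'n::finite \<Rightarrow> real \<Rightarrow> real"
  assumes "\<And>j. (f j has_real_derivative f' j y) (at y)"
  shows "((\<lambda>y. \<chi> j. f j y) has_vector_derivative (\<chi> j. f' j y)) (at y)"
  unfolding has_vector_derivative_def
proof (subst has_derivative_componentwise_within, intro ballI)
  fix b :: "real^'n" assume "b \<in> Basis"
  then obtain j where b: "b = axis j 1" by (auto simp: Basis_vec_def)
  have "(f j has_derivative (\<lambda>h. h * f' j y)) (at y)"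
    using assms[of j] by (simp add: has_field_derivative_def mult_commute_abs)
  then show "((\<lambda>y. (\<chi> j. f j y) \<bullet> b) has_derivative (\<lambda>h. h *\<^sub>R (\<chi> j. f' j y) \<bullet> b)) (at y)"
    by (simp add: b inner_axis)
qed

lemma phi_has_continuous_derivative:
  "\<exists>phi'. (\<forall>y. (phi D a g A B C K has_vector_derivative phi' y) (at y)) \<and> continuous_on UNIV phi'"
proof -
  define r where "r = (\<chi> i::2+2. case i of Inl p \<Rightarrow> C $ p | Inr p \<Rightarrow> K $ p - (1 / D) * (C \<bullet> B) * C $ p)"
  define N where "N = N1 D a g A B C"
  define c where "c i j = (\<lambda>n. mpow N n $ i $ Inl j / fact n)" for i j
  define phi' where "phi' y = (\<chi> j. \<Sum>i\<in>UNIV. r $ i * (\<Sum>n. diffs (c i j) n * y ^ n))" for y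
  have phi_eq: "phi D a g A B C K = (\<lambda>y. \<chi> j. \<Sum>i\<in>UNIV. r $ i * mat_exp (y *\<^sub>R N) $ i $ Inl j)"
    unfolding phi_def r_def N_def Let_def by simp
  have "(phi D a g A B C K has_vector_derivative phi' y) (at y)" for y
    unfolding phi_eq phi'_def
    by (rule has_vector_derivative_vec_lambda)
      (auto intro!: derivative_eq_intros mat_exp_scaleR_entry_has_derivative(1)
        simp: c_def mult.commute)
  moreover have "continuous_on UNIV phi'"
    unfolding phi'_def c_def
    by (intro continuous_intros mat_exp_scaleR_entry_has_derivative(2))
  ultimately show ?thesis by blast
qed

lemma phi_bounded:
  "\<exists>b\<ge>0. \<forall>y\<in>{-lb..0}. norm (phi D a g A B C K y) \<le> b
      \<and> norm (vector_derivative (phi D a g A B C K) (at y)) \<le> b"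
proof -
  obtain phi' where phi': "\<And>y. (phi D a g A B C K has_vector_derivative phi' y) (at y)"
    and cont': "continuous_on UNIV phi'"
    using phi_has_continuous_derivative by blast
  have "continuous_on {-lb..0} (phi D a g A B C K)"
    using phi' by (intro continuous_at_imp_continuous_on ballI has_vector_derivative_continuous)
  then obtain b1 where b1: "\<forall>y\<in>{-lb..0}. norm (phi D a g A B C K y) \<le> b1"
    using compact_imp_bounded[OF compact_continuous_image] bounded_iff by (metis compact_Icc imageI)
  obtain b2 where b2: "\<forall>y\<in>{-lb..0}. norm (phi' y) \<le> b2"
    using compact_imp_bounded[OF compact_continuous_image[OF continuous_on_subset[OF cont']]]
      bounded_iff by (metis compact_Icc imageI subset_UNIV)
  have "vector_derivative (phi D a g A B C K) (at y) = phi' y" for y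
    by (rule vector_derivative_at[OF phi'])
  then show ?thesis
    using b1 b2 by (intro exI[of _ "max 0 (max b1 b2)"]) (auto intro: order_trans)
qed

lemma Ffun_bounded:
  "\<exists>c>0. \<forall>L x Z. 0 < x \<and> x < L \<and> L \<le> lb \<longrightarrow> \<bar>Ffun D a g A B C K L x Z\<bar> \<le> c * norm Z"
proof -
  obtain b where b0: "b \<ge> 0" and b: "\<forall>y\<in>{-lb..0}. norm (phi D a g A B C K y) \<le> b
      \<and> norm (vector_derivative (phi D a g A B C K) (at y)) \<le> b"
    using phi_bounded by blast
  define c where "c = b + b * norm B * norm C / \<bar>D\<bar> + 1"
  have "\<bar>Ffun D a g A B C K L x Z\<bar> \<le> c * norm Z" if "0 < x" "x < L" "L \<le> lb" for L x Z
  proof -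
    have y: "x - L \<in> {-lb..0}" using that by auto
    have "\<bar>vector_derivative (phi D a g A B C K) (at (x - L)) \<bullet> Z\<bar> \<le> b * norm Z"
      using b y Cauchy_Schwarz_ineq2 by (meson mult_right_mono norm_ge_zero order_trans)
    moreover have "\<bar>phi D a g A B C K (x - L) \<bullet> B\<bar> \<le> b * norm B"
      using b y Cauchy_Schwarz_ineq2 by (meson mult_right_mono norm_ge_zero order_trans)
    then have "\<bar>kker D a g A B C K x L\<bar> \<le> b * norm B / \<bar>D\<bar>"
      by (simp add: kker_def abs_mult divide_right_mono)
    then have "\<bar>kker D a g A B C K x L * (C \<bullet> Z)\<bar> \<le> b * norm B / \<bar>D\<bar> * (norm C * norm Z)"
      unfolding abs_mult by (intro mult_mono Cauchy_Schwarz_ineq2) (auto simp: b0)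
    ultimately have "\<bar>Ffun D a g A B C K L x Z\<bar> \<le> b * norm Z + b * norm B * norm C / \<bar>D\<bar> * norm Z"
      unfolding Ffun_def by (smt (verit) abs_triangle_ineq4 mult.assoc times_divide_eq_left)
    also have "\<dots> \<le> c * norm Z" by (simp add: c_def algebra_simps)
    finally show ?thesis .
  qed
  moreover have "c > 0" using b0 by (simp add: c_def add_nonneg_pos)
  ultimately show ?thesis by blast
qed

section \<open>Quadratic forms\<close>

lemma pos_def_quadratic_form_ge:
  fixes Q :: "real^'n^'n"
  assumes "pos_def Q"
  shows "\<exists>q>0. \<forall>x. q * (norm x)\<^sup>2 \<le> x \<bullet> (Q *v x)"
proof -
  have pd: "x \<noteq> 0 \<Longrightarrow> x \<bullet> (Q *v x) > 0" for x
    using assms by (auto simp: pos_def_def)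
  have "continuous_on (sphere 0 1) (\<lambda>x::real^'n. x \<bullet> (Q *v x))"
    by (intro continuous_intros linear_continuous_on) auto
  moreover have "sphere (0::real^'n) 1 \<noteq> {}"
    by simp
  ultimately obtain u where u: "u \<in> sphere 0 1"
    and min: "\<And>y. y \<in> sphere 0 1 \<Longrightarrow> u \<bullet> (Q *v u) \<le> y \<bullet> (Q *v y)"
    using continuous_attains_inf[OF compact_sphere] by blast
  define q where "q = u \<bullet> (Q *v u)"
  have "u \<noteq> 0"
    using u by auto
  then have "q > 0"
    using pd by (simp add: q_def)
  moreover have "q * (norm x)\<^sup>2 \<le> x \<bullet> (Q *v x)" for x
  proof (cases "x = 0")
    case False
    have "q \<le> ((1 / norm x) *\<^sub>R x) \<bullet> (Q *v ((1 / norm x) *\<^sub>R x))"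
      unfolding q_def using False by (intro min) simp
    also have "\<dots> = (x \<bullet> (Q *v x)) / (norm x)\<^sup>2"
      by (simp add: matrix_vector_mult_scaleR power2_eq_square)
    finally show ?thesis
      using False by (simp add: field_simps)
  qed simp
  ultimately show ?thesis by blast
qed

lemma quadratic_form_le:
  fixes P :: "real^'n^'n"
  shows "\<exists>p>0. \<forall>x. x \<bullet> (P *v x) \<le> p * (norm x)\<^sup>2"
proof -
  obtain p where p: "p > 0" "\<And>x. norm (P *v x) \<le> norm x * p"
    using bounded_linear.pos_bounded[OF matrix_vector_mul_bounded_linear[of P]] by blast
  have "x \<bullet> (P *v x) \<le> p * (norm x)\<^sup>2" for x
  proof -
    have "x \<bullet> (P *v x) \<le> norm x * norm (P *v x)"
      by (rule norm_cauchy_schwarz)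
    also have "\<dots> \<le> norm x * (norm x * p)"
      by (intro mult_left_mono p) auto
    finally show ?thesis
      by (simp add: power2_eq_square mult_ac)
  qed
  then show ?thesis
    using p by blast
qed

lemma inner_transpose_matrix: "x \<bullet> (transpose M *v y) = (M *v x) \<bullet> (y::real^'n)"
  using dot_lmul_matrix[of x "transpose M" y] by simp

lemma lyapunov_quadratic_form:
  fixes P Q M :: "real^'n^'n"
  assumes "transpose M ** P + P ** M = - Q" and "transpose P = P"
  shows "2 * (x \<bullet> (P *v (M *v x))) = - (x \<bullet> (Q *v x))"
proof -
  have "(- Q) *v x = - (Q *v x)"
    by (simp add: vec_eq_iff matrix_vector_mult_def sum_negf)
  then have "x \<bullet> (Q *v x) = - (x \<bullet> ((transpose M ** P + P ** M) *v x))"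
    using assms(1) by simp
  also have "\<dots> = - (x \<bullet> (transpose M *v (P *v x)) + x \<bullet> (P *v (M *v x)))"
    by (simp add: matrix_vector_mult_add_rdistrib matrix_vector_mul_assoc inner_add_right)
  also have "x \<bullet> (transpose M *v (P *v x)) = x \<bullet> (P *v (M *v x))"
    using assms(2) by (metis inner_commute inner_transpose_matrix)
  finally show ?thesis by simp
qed

lemma has_real_derivative_quadratic_form:
  fixes P :: "real^'n^'n"
  assumes "(X has_vector_derivative X') (at t within S)" and "transpose P = P"
  shows "((\<lambda>s. X s \<bullet> (P *v X s)) has_real_derivative 2 * (X t \<bullet> (P *v X'))) (at t within S)"
proof -
  have X: "(X has_derivative (\<lambda>h. h *\<^sub>R X')) (at t within S)"
    using assms(1) by (simp add: has_vector_derivative_def)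
  have "((\<lambda>s. X s \<bullet> (P *v X s)) has_derivative
         (\<lambda>h. X t \<bullet> (P *v (h *\<^sub>R X')) + (h *\<^sub>R X') \<bullet> (P *v X t))) (at t within S)"
    by (intro has_derivative_inner X bounded_linear.has_derivative[OF matrix_vector_mul_bounded_linear])
  moreover have "X' \<bullet> (P *v X t) = X t \<bullet> (P *v X')"
    using assms(2) by (metis inner_commute inner_transpose_matrix)
  then have "(\<lambda>h. X t \<bullet> (P *v (h *\<^sub>R X')) + (h *\<^sub>R X') \<bullet> (P *v X t)) = (*) (2 * (X t \<bullet> (P *v X')))"
    by (simp add: fun_eq_iff matrix_vector_mult_scaleR)
  ultimately show ?thesis
    by (simp add: has_field_derivative_def)
qed

section \<open>Calculus in two variables\<close>

lemma has_real_derivative_compose2: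
  fixes f :: "real \<Rightarrow> real \<Rightarrow> real"
  assumes f: "((\<lambda>q. f (fst q) (snd q)) has_derivative (\<lambda>h. fx * fst h + fy * snd h)) (at (x t, y t))"
    and x: "(x has_real_derivative x') (at t within T)"
    and y: "(y has_real_derivative y') (at t within T)"
  shows "((\<lambda>s. f (x s) (y s)) has_real_derivative fx * x' + fy * y') (at t within T)"
proof -
  have "((\<lambda>s. (x s, y s)) has_derivative (\<lambda>h. (x' * h, y' * h))) (at t within T)"
    using x y by (intro has_derivative_Pair) (simp_all add: has_field_derivative_def)
  from diff_chain_within[OF this has_derivative_at_withinI[OF f]]
  have "((\<lambda>s. f (x s) (y s)) has_derivative (\<lambda>h. (fx * x' + fy * y') * h)) (at t within T)"
    by (simp add: o_def algebra_simps)
  then show ?thesis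
    by (simp add: has_field_derivative_def)
qed

lemma Icc_times_Icc_subset_open:
  fixes U :: "(real \<times> real) set"
  assumes "open U" and "a \<le> b" and "{a..b} \<times> {t} \<subseteq> U"
  obtains \<delta> where "\<delta> > 0" and "{a-\<delta>..b+\<delta>} \<times> {t-\<delta>..t+\<delta>} \<subseteq> U"
proof -
  obtain e where e: "e > 0" "(\<Union>p\<in>{a..b} \<times> {t}. ball p e) \<subseteq> U"
    by (rule compact_subset_open_imp_ball_epsilon_subset[OF compact_Times[OF compact_Icc compact_sing]
          assms(1,3)])
  have "(x, s) \<in> U" if "x \<in> {a-e/3..b+e/3}" "s \<in> {t-e/3..t+e/3}" for x s
  proof -
    define x' where "x' = max a (min b x)"
    have x': "x' \<in> {a..b}"
      using assms(2) by (auto simp: x'_def)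
    have "dist x' x \<le> e/3" "dist t s \<le> e/3"
      using that assms(2) e(1) unfolding x'_def dist_real_def atLeastAtMost_iff by arith+
    moreover have "dist (x', t) (x, s) \<le> dist x' x + dist t s"
      unfolding dist_Pair_Pair by (intro sqrt_sum_squares_le_sum) auto
    ultimately have "dist (x', t) (x, s) < e"
      using e(1) by linarith
    then have "(x, s) \<in> (\<Union>p\<in>{a..b} \<times> {t}. ball p e)"
      using x' by (intro UN_I[of "(x', t)"]) auto
    then show ?thesis
      using e(2) by blast
  qed
  then have "{a-e/3..b+e/3} \<times> {t-e/3..t+e/3} \<subseteq> U"
    by (auto simp del: atLeastAtMost_iff)
  then show thesis
    using e(1) that[of "e/3"] by simp
qed

lemma continuous_on_slice:
  fixes f :: "'a::topological_space \<Rightarrow> 'b::topological_space \<Rightarrow> 'c::topological_space"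
  assumes "continuous_on (A \<times> B) (\<lambda>(x, s). f x s)" and "S \<subseteq> A" and "s \<in> B"
  shows "continuous_on S (\<lambda>x. f x s)"
proof -
  have "(\<lambda>x. (x, s)) ` S \<subseteq> A \<times> B"
    using assms(2,3) by auto
  from continuous_on_compose2[OF assms(1) continuous_on_Pair[OF continuous_on_id continuous_on_const] this]
  show ?thesis
    by simp
qed

lemma leibniz_rule_Icc:
  fixes f ft :: "real \<Rightarrow> real \<Rightarrow> real" and a b t \<delta> :: real
  defines "B \<equiv> {a..b} \<times> {t-\<delta>..t+\<delta>}"
  assumes "\<delta> > 0"
    and f_t: "\<And>x s. (x, s) \<in> B \<Longrightarrow> ((\<lambda>s. f x s) has_real_derivative ft x s) (at s)"
    and f_cont: "continuous_on B (\<lambda>(x, s). f x s)" and ft_cont: "continuous_on B (\<lambda>(x, s). ft x s)"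
  shows "((\<lambda>s. integral {a..b} (\<lambda>x. f x s)) has_real_derivative integral {a..b} (\<lambda>x. ft x t)) (at t)"
proof -
  have "((\<lambda>s. integral (cbox a b) (\<lambda>x. f x s)) has_field_derivative integral (cbox a b) (\<lambda>x. ft x t))
      (at t within {t-\<delta>..t+\<delta>})"
  proof (rule leibniz_rule_field_derivative[where f="\<lambda>s x. f x s" and fx="\<lambda>s x. ft x s"])
    fix s x assume "s \<in> {t-\<delta>..t+\<delta>}" "x \<in> cbox a b"
    then show "((\<lambda>s. f x s) has_field_derivative ft x s) (at s within {t-\<delta>..t+\<delta>})"
      by (intro has_field_derivative_at_within[OF f_t]) (simp add: B_def)
  next
    fix s assume "s \<in> {t-\<delta>..t+\<delta>}"
    then show "(\<lambda>x. f x s) integrable_on cbox a b"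
      by (intro integrable_continuous continuous_on_slice[OF f_cont[unfolded B_def]]) auto
  next
    show "continuous_on ({t-\<delta>..t+\<delta>} \<times> cbox a b) (\<lambda>(s, x). ft x s)"
      using continuous_on_swap_args[OF ft_cont[unfolded B_def]] by simp
  qed (use \<open>\<delta> > 0\<close> in auto)
  then show ?thesis
    using \<open>\<delta> > 0\<close> by (simp add: at_within_Icc_at)
qed

lemma has_derivative_integral_Icc_two_var:
  fixes f ft :: "real \<Rightarrow> real \<Rightarrow> real" and a L t \<delta> :: real
  defines "B \<equiv> {a..L + \<delta>} \<times> {t-\<delta>..t+\<delta>}"
  assumes "\<delta> > 0" and "a \<le> L"
    and f_t: "\<And>x s. (x, s) \<in> B \<Longrightarrow> ((\<lambda>s. f x s) has_real_derivative ft x s) (at s)"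
    and f_cont: "continuous_on B (\<lambda>(x, s). f x s)" and ft_cont: "continuous_on B (\<lambda>(x, s). ft x s)"
  shows "((\<lambda>(s, y). integral {a..y} (\<lambda>x. f x s)) has_derivative
      (\<lambda>(hs, hy). integral {a..L} (\<lambda>x. ft x t) * hs + f L t * hy)) (at (t, L) within {t-\<delta>..t+\<delta>} \<times> {a..L + \<delta>})"
proof -
  have "continuous_on ({a..L} \<times> {t-\<delta>..t+\<delta>}) (\<lambda>(x, s). h x s)"
    if "continuous_on B (\<lambda>(x, s). h x s)" for h :: "real \<Rightarrow> real \<Rightarrow> real"
    by (rule continuous_on_subset[OF that]) (auto simp: B_def)
  with f_cont ft_cont have "((\<lambda>s. integral {a..L} (\<lambda>x. f x s)) has_real_derivative integral {a..L} (\<lambda>x. ft x t)) (at t)"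
    using \<open>\<delta> > 0\<close> by (intro leibniz_rule_Icc f_t) (auto simp: B_def)
  then have fixed_limit: "((\<lambda>s. integral {a..L} (\<lambda>x. f x s)) has_derivative (*) (integral {a..L} (\<lambda>x. ft x t)))
      (at t within {t-\<delta>..t+\<delta>})"
    by (simp add: has_field_derivative_def has_derivative_at_withinI)
  have upper_limit: "((\<lambda>y. integral {a..y} (\<lambda>x. f x s)) has_derivative blinfun_apply (blinfun_mult_right (f y s)))
      (at y within {a..L + \<delta>})" if "s \<in> {t-\<delta>..t+\<delta>}" "y \<in> {a..L + \<delta>}" for s y
  proof -
    have "((\<lambda>u. integral {a..u} (\<lambda>x. f x s)) has_vector_derivative f y s) (at y within {a..L + \<delta>})"
      using that by (intro integral_has_vector_derivative continuous_on_slice[OF f_cont[unfolded B_def]]) auto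
    then show ?thesis
      by (simp add: has_real_derivative_iff_has_vector_derivative[symmetric]
          has_field_derivative_eq_has_derivative_blinfun)
  qed
  have "continuous_on ({t-\<delta>..t+\<delta>} \<times> {a..L + \<delta>}) (\<lambda>p. blinfun_mult_right ((\<lambda>(s, y). f y s) p))"
    using continuous_on_swap_args[OF f_cont[unfolded B_def]]
    by (rule bounded_linear.continuous_on[OF bounded_linear_blinfun_mult_right])
  then have "continuous (at (t, L) within {t-\<delta>..t+\<delta>} \<times> {a..L + \<delta>}) (\<lambda>(s, y). blinfun_mult_right (f y s))"
    using \<open>\<delta> > 0\<close> \<open>a \<le> L\<close> by (simp add: case_prod_unfold continuous_on_eq_continuous_within)
  from has_derivative_partialsI[OF fixed_limit upper_limit this]
  show ?thesis
    using \<open>\<delta> > 0\<close> \<open>a \<le> L\<close> by (simp add: mult.commute)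
qed

lemma has_real_derivative_integral_upper_limit:
  fixes f ft :: "real \<Rightarrow> real \<Rightarrow> real" and l :: "real \<Rightarrow> real" and a t \<delta> :: real
  defines "B \<equiv> {a..l t + \<delta>} \<times> {t-\<delta>..t+\<delta>}"
  assumes "\<delta> > 0"
    and f_t: "\<And>x s. (x, s) \<in> B \<Longrightarrow> ((\<lambda>s. f x s) has_real_derivative ft x s) (at s)"
    and f_cont: "continuous_on B (\<lambda>(x, s). f x s)" and ft_cont: "continuous_on B (\<lambda>(x, s). ft x s)"
    and l: "(l has_real_derivative l') (at t within T)" and "t \<in> T" and l_ge: "\<And>s. s \<in> T \<Longrightarrow> a \<le> l s"
  shows "((\<lambda>s. integral {a..l s} (\<lambda>x. f x s)) has_real_derivative
            integral {a..l t} (\<lambda>x. ft x t) + f (l t) t * l') (at t within T)"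
proof -
  define I where "I = integral {a..l t} (\<lambda>x. ft x t)"
  have "continuous (at t within T) l"
    by (rule DERIV_continuous[OF l])
  then obtain d where "d > 0" and d: "\<And>s. s \<in> T \<Longrightarrow> dist s t < d \<Longrightarrow> dist (l s) (l t) < \<delta>"
    using \<open>\<delta> > 0\<close> unfolding continuous_within_eps_delta by metis
  define S where "S = T \<inter> ball t (min d \<delta>)"
  have "(\<lambda>s. (s, l s)) ` S \<subseteq> {t-\<delta>..t+\<delta>} \<times> {a..l t + \<delta>}"
    using d l_ge by (force simp: S_def dist_real_def abs_minus_commute abs_less_iff)
  with has_derivative_integral_Icc_two_var[OF \<open>\<delta> > 0\<close> l_ge[OF \<open>t \<in> T\<close>] f_t[unfolded B_def]
      f_cont[unfolded B_def] ft_cont[unfolded B_def]]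
  have outer: "((\<lambda>(s, y). integral {a..y} (\<lambda>x. f x s)) has_derivative (\<lambda>(hs, hy). I * hs + f (l t) t * hy))
      (at (t, l t) within (\<lambda>s. (s, l s)) ` S)"
    unfolding I_def by (rule has_derivative_subset)
  have inner: "((\<lambda>s. (s, l s)) has_derivative (\<lambda>h. (h, l' * h))) (at t within S)"
    using has_field_derivative_subset[OF l] by (intro has_derivative_Pair has_derivative_ident)
      (auto simp: S_def has_field_derivative_def)
  from diff_chain_within[OF inner outer]
  have "((\<lambda>s. integral {a..l s} (\<lambda>x. f x s)) has_derivative (\<lambda>h. (I + f (l t) t * l') * h)) (at t within S)"
    by (simp add: o_def algebra_simps)
  moreover have "at t within S = at t within T"
    unfolding S_def using \<open>d > 0\<close> \<open>\<delta> > 0\<close> by (intro at_within_nhd[of _ "ball t (min d \<delta>)"]) auto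
  ultimately show ?thesis
    by (simp add: has_field_derivative_def I_def)
qed

text \<open>Leibniz's rule applied to \<open>\<integral>\<^sub>a\<^sup>z f\<^sub>x(x,s) dx = f(z,s) - f(a,s)\<close>.\<close>

lemma integral_mixed_partial:
  fixes f fx ft fxt :: "real \<Rightarrow> real \<Rightarrow> real" and a b t \<delta> :: real
  defines "B \<equiv> {a..b} \<times> {t-\<delta>..t+\<delta>}"
  assumes "\<delta> > 0" and "z \<in> {a..b}"
    and f_x: "\<And>x s. (x, s) \<in> B \<Longrightarrow> ((\<lambda>x. f x s) has_real_derivative fx x s) (at x within {a..b})"
    and f_t: "\<And>x s. (x, s) \<in> B \<Longrightarrow> ((\<lambda>s. f x s) has_real_derivative ft x s) (at s)"
    and fx_t: "\<And>x s. (x, s) \<in> B \<Longrightarrow> ((\<lambda>s. fx x s) has_real_derivative fxt x s) (at s)"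
    and fx_cont: "continuous_on B (\<lambda>(x, s). fx x s)" and fxt_cont: "continuous_on B (\<lambda>(x, s). fxt x s)"
  shows "integral {a..z} (\<lambda>x. fxt x t) = ft z t - ft a t"
proof -
  have sub: "{a..z} \<times> {t-\<delta>..t+\<delta>} \<subseteq> B"
    using \<open>z \<in> {a..b}\<close> by (auto simp: B_def)
  have leibniz: "((\<lambda>s. integral {a..z} (\<lambda>x. fx x s)) has_real_derivative integral {a..z} (\<lambda>x. fxt x t)) (at t)"
    by (rule leibniz_rule_Icc[OF \<open>\<delta> > 0\<close> fx_t continuous_on_subset[OF fx_cont sub]
          continuous_on_subset[OF fxt_cont sub]]) (use sub in blast)
  have ftc: "f z s - f a s = integral {a..z} (\<lambda>x. fx x s)" if "s \<in> ball t \<delta>" for s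
  proof (rule sym, rule integral_unique, rule fundamental_theorem_of_calculus)
    fix x assume "x \<in> {a..z}"
    then have "((\<lambda>x. f x s) has_real_derivative fx x s) (at x within {a..b})"
      using that \<open>z \<in> {a..b}\<close> by (intro f_x) (auto simp: B_def dist_real_def abs_less_iff)
    then show "((\<lambda>x. f x s) has_vector_derivative fx x s) (at x within {a..z})"
      using \<open>z \<in> {a..b}\<close> by (auto simp: has_real_derivative_iff_has_vector_derivative[symmetric] intro: DERIV_subset)
  qed (use \<open>z \<in> {a..b}\<close> in auto)
  have "(z, t) \<in> B" "(a, t) \<in> B"
    using \<open>z \<in> {a..b}\<close> \<open>\<delta> > 0\<close> by (auto simp: B_def)
  from DERIV_diff[OF f_t[OF this(1)] f_t[OF this(2)]]
  have "((\<lambda>s. integral {a..z} (\<lambda>x. fx x s)) has_real_derivative ft z t - ft a t) (at t)"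
    by (rule has_field_derivative_transform_within_open[OF _ open_ball centre_in_ball[THEN iffD2] ftc])
      (use \<open>\<delta> > 0\<close> in auto)
  with leibniz show ?thesis
    by (rule DERIV_unique)
qed

lemma has_real_derivative_mixed_partial:
  fixes f fx ft fxt :: "real \<Rightarrow> real \<Rightarrow> real" and a b t \<delta> :: real
  defines "B \<equiv> {a..b} \<times> {t-\<delta>..t+\<delta>}"
  assumes "\<delta> > 0" and "y \<in> {a..b}"
    and f_x: "\<And>x s. (x, s) \<in> B \<Longrightarrow> ((\<lambda>x. f x s) has_real_derivative fx x s) (at x within {a..b})"
    and f_t: "\<And>x s. (x, s) \<in> B \<Longrightarrow> ((\<lambda>s. f x s) has_real_derivative ft x s) (at s)"
    and fx_t: "\<And>x s. (x, s) \<in> B \<Longrightarrow> ((\<lambda>s. fx x s) has_real_derivative fxt x s) (at s)"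
    and fx_cont: "continuous_on B (\<lambda>(x, s). fx x s)" and fxt_cont: "continuous_on B (\<lambda>(x, s). fxt x s)"
  shows "((\<lambda>x. ft x t) has_real_derivative fxt y t) (at y within {a..b})"
proof -
  have "continuous_on {a..b} (\<lambda>x. fxt x t)"
    using continuous_on_slice[OF fxt_cont[unfolded B_def] order_refl] \<open>\<delta> > 0\<close> by simp
  from integral_has_vector_derivative[OF this \<open>y \<in> {a..b}\<close>]
  have "((\<lambda>u. ft a t + integral {a..u} (\<lambda>x. fxt x t)) has_real_derivative fxt y t) (at y within {a..b})"
    by (auto simp: has_real_derivative_iff_has_vector_derivative[symmetric] intro!: derivative_eq_intros)
  then show ?thesis
    by (rule has_field_derivative_transform_within[where d=1])
      (use \<open>y \<in> {a..b}\<close> integral_mixed_partial[OF assms(2) _ f_x[unfolded B_def] f_t[unfolded B_def]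
        fx_t[unfolded B_def] fx_cont[unfolded B_def] fxt_cont[unfolded B_def]] in auto)
qed

lemma has_real_derivative_partials:
  fixes f :: "real \<Rightarrow> real \<Rightarrow> real"
  assumes "((\<lambda>q. f (fst q) (snd q)) has_derivative (\<lambda>h. fx * fst h + fy * snd h)) (at (x, y))"
  shows "((\<lambda>x. f x y) has_real_derivative fx) (at x)"
    and "((\<lambda>y. f x y) has_real_derivative fy) (at y)"
  using has_real_derivative_compose2[where x="\<lambda>s. s" and y="\<lambda>_. y" and t=x, OF assms DERIV_ident DERIV_const]
    has_real_derivative_compose2[where x="\<lambda>_. x" and y="\<lambda>s. s" and t=y, OF assms DERIV_const DERIV_ident]
  by simp_all

lemma integral_by_parts_within:
  fixes u v u' v' :: "real \<Rightarrow> real"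
  assumes "a \<le> b"
    and u: "\<And>x. x \<in> {a..b} \<Longrightarrow> (u has_real_derivative u' x) (at x within {a..b})"
    and v: "\<And>x. x \<in> {a..b} \<Longrightarrow> (v has_real_derivative v' x) (at x within {a..b})"
    and "continuous_on {a..b} u'" and "continuous_on {a..b} v'"
  shows "integral {a..b} (\<lambda>x. u x * v' x) = u b * v b - u a * v a - integral {a..b} (\<lambda>x. u' x * v x)"
proof -
  have "continuous_on {a..b} u" "continuous_on {a..b} v"
    unfolding continuous_on_eq_continuous_within using DERIV_continuous[OF u] DERIV_continuous[OF v] by blast+
  then have "(\<lambda>x. u' x * v x) integrable_on {a..b}" "(\<lambda>x. u x * v' x) integrable_on {a..b}"
    using assms(4,5) by (auto intro!: integrable_continuous_real continuous_on_mult)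
  note integral_add[OF this]
  moreover have "((\<lambda>x. u' x * v x + u x * v' x) has_integral u b * v b - u a * v a) {a..b}"
  proof (rule fundamental_theorem_of_calculus[OF assms(1)])
    fix x assume "x \<in> {a..b}"
    from DERIV_mult[OF u[OF this] v[OF this]]
    show "((\<lambda>x. u x * v x) has_vector_derivative u' x * v x + u x * v' x) (at x within {a..b})"
      by (simp add: has_real_derivative_iff_has_vector_derivative mult.commute)
  qed
  ultimately show ?thesis
    by (simp add: integral_unique)
qed

section \<open>Energy identities along solutions of the target system\<close>

locale target_system =
  fixes D a g rg atil beta gam ls lc cinf :: real
    and K :: "real^2" and P Q :: "real^2^2"
    and X :: "real \<Rightarrow> real^2" and l :: "real \<Rightarrow> real"
    and w wx wt wxx wxt :: "real \<Rightarrow> real \<Rightarrow> real"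
    and U :: "(real \<times> real) set"
  assumes D_pos: "D > 0"
    and P_sym: "transpose P = P"
    and lyap: "transpose (Amat atil rg + outer (Bvec beta) K) ** P + P ** (Amat atil rg + outer (Bvec beta) K) = - Q"
    and l_def: "\<forall>t. l t = ls + X t $ 2"
    and U_open: "open U"
    and U_dom: "{(x, t). 0 \<le> t \<and> 0 \<le> x \<and> x \<le> l t} \<subseteq> U"
    and w_deriv: "\<forall>p\<in>U. ((\<lambda>q. w (fst q) (snd q)) has_derivative
                      (\<lambda>h. wx (fst p) (snd p) * fst h + wt (fst p) (snd p) * snd h)) (at p)"
    and wx_deriv: "\<forall>p\<in>U. ((\<lambda>q. wx (fst q) (snd q)) has_derivative
                      (\<lambda>h. wxx (fst p) (snd p) * fst h + wxt (fst p) (snd p) * snd h)) (at p)"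
    and wt_cont: "continuous_on U (\<lambda>q. wt (fst q) (snd q))"
    and wxx_cont: "continuous_on U (\<lambda>q. wxx (fst q) (snd q))"
    and wxt_cont: "continuous_on U (\<lambda>q. wxt (fst q) (snd q))"
    and pde: "\<forall>t\<ge>0. \<forall>x. 0 < x \<and> x < l t \<longrightarrow>
                wt x t = D * wxx x t - a * wx x t - g * w x t
                  - (rg * X t $ 1) * Ffun D a g (Amat atil rg) (Bvec beta) (Cvec D a g lc cinf) K (l t) x (X t)"
    and bc0: "\<forall>t\<ge>0. wx 0 t = gam * w 0 t"
    and bcl: "\<forall>t\<ge>0. w (l t) t = 0"
    and ode: "\<forall>t\<ge>0. (X has_vector_derivative
                ((Amat atil rg + outer (Bvec beta) K) *v X t + wx (l t) t *\<^sub>R Bvec beta)) (at t within {0..})"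
    and l_pos: "\<forall>t\<ge>0. 0 < l t"
begin

abbreviation "Acl \<equiv> Amat atil rg + outer (Bvec beta) K"

definition ldot :: "real \<Rightarrow> real" where
  "ldot t = rg * X t $ 1"

text \<open>By the PDE, \<open>forcing x t = ldot t * F(x, X t)\<close> for \<open>0 < x < l t\<close>.\<close>

definition forcing :: "real \<Rightarrow> real \<Rightarrow> real" where
  "forcing x t = D * wxx x t - a * wx x t - g * w x t - wt x t"

definition int_sq :: "(real \<Rightarrow> real \<Rightarrow> real) \<Rightarrow> real \<Rightarrow> real" where
  "int_sq f t = integral {0..l t} (\<lambda>x. (f x t)\<^sup>2)"

definition V :: "real \<Rightarrow> real \<Rightarrow> real \<Rightarrow> real" where
  "V d1 d2 t = d1 / 2 * int_sq w t + 1 / 2 * int_sq wx t + gam / 2 * (w 0 t)\<^sup>2 + d2 * (X t \<bullet> (P *v X t))"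

text \<open>
  The derivative of \<open>V\<close> after substituting \<open>wt = D wxx - a wx - g w - forcing\<close> and integrating
  by parts; the boundary values come from \<open>bc0\<close>, \<open>bcl\<close> and \<open>wt_at_boundary\<close>, and the
  \<open>X\<close>-part from the Lyapunov equation.
\<close>

definition V_deriv :: "real \<Rightarrow> real \<Rightarrow> real \<Rightarrow> real" where
  "V_deriv d1 d2 t =
     d1 * (- D * gam * (w 0 t)\<^sup>2 - D * int_sq wx t + a / 2 * (w 0 t)\<^sup>2 - g * int_sq w t
           - integral {0..l t} (\<lambda>x. w x t * forcing x t))
     - ldot t / 2 * (wx (l t) t)\<^sup>2 - D * int_sq wxx t + a / 2 * ((wx (l t) t)\<^sup>2 - gam\<^sup>2 * (w 0 t)\<^sup>2)
     - g * (gam * (w 0 t)\<^sup>2 + int_sq wx t) + integral {0..l t} (\<lambda>x. wxx x t * forcing x t)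
     + d2 * (- (X t \<bullet> (Q *v X t)) + 2 * wx (l t) t * (X t \<bullet> (P *v Bvec beta)))"

lemma continuous_on_U:
  shows "continuous_on U (\<lambda>(x, s). w x s)" and "continuous_on U (\<lambda>(x, s). wx x s)"
    and "continuous_on U (\<lambda>(x, s). wt x s)" and "continuous_on U (\<lambda>(x, s). wxx x s)"
    and "continuous_on U (\<lambda>(x, s). wxt x s)"
  using w_deriv wx_deriv wt_cont wxx_cont wxt_cont
  by (auto simp: case_prod_unfold intro!: continuous_at_imp_continuous_on has_derivative_continuous)

lemma partial_derivatives:
  assumes "(x, s) \<in> U"
  shows w_x: "((\<lambda>x. w x s) has_real_derivative wx x s) (at x)"
    and w_t: "((\<lambda>s. w x s) has_real_derivative wt x s) (at s)"
    and wx_x: "((\<lambda>x. wx x s) has_real_derivative wxx x s) (at x)"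
    and wx_t: "((\<lambda>s. wx x s) has_real_derivative wxt x s) (at s)"
  using has_real_derivative_partials[of w "wx x s" "wt x s" x s]
    has_real_derivative_partials[of wx "wxx x s" "wxt x s" x s] w_deriv wx_deriv assms
  by auto

lemma slice_subset_U: "t \<ge> 0 \<Longrightarrow> {0..l t} \<times> {t} \<subseteq> U"
  using U_dom by auto

lemma box_subset_U:
  assumes "t \<ge> 0"
  obtains \<delta> where "\<delta> > 0" and "{0..l t + \<delta>} \<times> {t-\<delta>..t+\<delta>} \<subseteq> U"
proof -
  obtain \<delta> where "\<delta> > 0" and "{0-\<delta>..l t + \<delta>} \<times> {t-\<delta>..t+\<delta>} \<subseteq> U"
    using Icc_times_Icc_subset_open[OF U_open _ slice_subset_U[OF assms]] l_pos assms
    by (metis less_eq_real_def)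
  then show thesis
    by (intro that[of \<delta>]) (auto simp: subset_iff)
qed

lemma l_has_derivative:
  assumes "t \<ge> 0"
  shows "(l has_real_derivative ldot t) (at t within {0..})"
proof -
  have "(X has_derivative (\<lambda>h. h *\<^sub>R (Acl *v X t + wx (l t) t *\<^sub>R Bvec beta))) (at t within {0..})"
    using ode assms by (simp add: has_vector_derivative_def)
  from bounded_linear.has_derivative[OF bounded_linear_vec_nth[of 2] this]
  have "((\<lambda>s. X s $ 2) has_real_derivative ldot t) (at t within {0..})"
    by (simp add: has_field_derivative_def ldot_def Amat_def outer_def Bvec_def matrix_vector_mult_def
        sum_2 mult_commute_abs)
  moreover have "l = (\<lambda>s. ls + X s $ 2)"
    using l_def by auto
  ultimately show ?thesis
    by (auto intro!: derivative_eq_intros)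
qed

lemma wt_at_boundary:
  assumes "t \<ge> 0"
  shows "wt (l t) t = - ldot t * wx (l t) t"
proof -
  have "(l t, t) \<in> U"
    using U_dom l_pos assms by force
  then have "((\<lambda>s. w (l s) s) has_real_derivative wx (l t) t * ldot t + wt (l t) t * 1) (at t within {0..})"
    using w_deriv by (intro has_real_derivative_compose2 l_has_derivative[OF assms] DERIV_ident) auto
  moreover have "((\<lambda>s. w (l s) s) has_real_derivative 0) (at t within {0..})"
    by (rule has_field_derivative_transform_within[OF DERIV_const zero_less_one])
      (use assms bcl in auto)
  moreover have "at t within {0..} \<noteq> bot"
  proof
    assume "at t within {0..} = bot"
    moreover have "at_right t \<le> at t within {0..}"
      by (rule at_le) (use assms in auto)
    ultimately show False
      by (simp add: bot_unique)
  qed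
  ultimately have "wx (l t) t * ldot t + wt (l t) t * 1 = 0"
    by (rule has_field_derivative_unique)
  then show ?thesis
    by (simp add: algebra_simps)
qed

lemma wt_has_derivative_x:
  assumes "t \<ge> 0" and "y \<in> {0..l t}"
  shows "((\<lambda>x. wt x t) has_real_derivative wxt y t) (at y within {0..l t})"
proof -
  obtain \<delta> where "\<delta> > 0" and "{0..l t + \<delta>} \<times> {t-\<delta>..t+\<delta>} \<subseteq> U"
    using box_subset_U[OF assms(1)] .
  then have B: "{0..l t} \<times> {t-\<delta>..t+\<delta>} \<subseteq> U"
    by (force simp: subset_iff)
  then have in_U: "(x, s) \<in> U" if "(x, s) \<in> {0..l t} \<times> {t-\<delta>..t+\<delta>}" for x s
    using that by blast
  show ?thesis
  proof (rule has_real_derivative_mixed_partial[where f=w and fx=wx and ft=wt and fxt=wxt and t=t,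
        OF \<open>\<delta> > 0\<close> assms(2)])
    show "continuous_on ({0..l t} \<times> {t-\<delta>..t+\<delta>}) (\<lambda>(x, s). wx x s)"
      "continuous_on ({0..l t} \<times> {t-\<delta>..t+\<delta>}) (\<lambda>(x, s). wxt x s)"
      using B continuous_on_U by (auto intro: continuous_on_subset)
  qed (auto intro!: has_field_derivative_at_within[OF w_x] w_t wx_t in_U)
qed

lemma slice_continuous:
  assumes "t \<ge> 0"
  shows "continuous_on {0..l t} (\<lambda>x. w x t)" and "continuous_on {0..l t} (\<lambda>x. wx x t)"
    and "continuous_on {0..l t} (\<lambda>x. wt x t)" and "continuous_on {0..l t} (\<lambda>x. wxx x t)"
    and "continuous_on {0..l t} (\<lambda>x. wxt x t)" and "continuous_on {0..l t} (\<lambda>x. forcing x t)"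
proof -
  have slice: "continuous_on {0..l t} (\<lambda>x. f x t)" if "continuous_on U (\<lambda>(x, s). f x s)"
    for f :: "real \<Rightarrow> real \<Rightarrow> real"
    by (rule continuous_on_slice[OF continuous_on_subset[OF that slice_subset_U[OF assms]] order_refl])
      simp
  show "continuous_on {0..l t} (\<lambda>x. w x t)" "continuous_on {0..l t} (\<lambda>x. wx x t)"
    "continuous_on {0..l t} (\<lambda>x. wt x t)" "continuous_on {0..l t} (\<lambda>x. wxx x t)"
    "continuous_on {0..l t} (\<lambda>x. wxt x t)"
    using continuous_on_U by (auto intro: slice)
  then show "continuous_on {0..l t} (\<lambda>x. forcing x t)"
    unfolding forcing_def by (intro continuous_intros)
qed

lemma slice_derivatives:
  assumes "t \<ge> 0" and "x \<in> {0..l t}"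
  shows "((\<lambda>x. w x t) has_real_derivative wx x t) (at x within {0..l t})"
    and "((\<lambda>x. wx x t) has_real_derivative wxx x t) (at x within {0..l t})"
    and "((\<lambda>x. wt x t) has_real_derivative wxt x t) (at x within {0..l t})"
  using slice_subset_U[OF assms(1)] assms
  by (auto intro!: has_field_derivative_at_within[OF w_x] has_field_derivative_at_within[OF wx_x]
      wt_has_derivative_x)

lemma integral_w_wt:
  assumes "t \<ge> 0"
  shows "integral {0..l t} (\<lambda>x. w x t * wt x t)
    = - D * gam * (w 0 t)\<^sup>2 - D * int_sq wx t + a / 2 * (w 0 t)\<^sup>2 - g * int_sq w t
      - integral {0..l t} (\<lambda>x. w x t * forcing x t)"
proof -
  have L: "0 \<le> l t"
    using l_pos assms by (simp add: less_imp_le)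
  note cont = slice_continuous[OF assms] and deriv = slice_derivatives[OF assms]
  have w_wxx: "integral {0..l t} (\<lambda>x. w x t * wxx x t) = - gam * (w 0 t)\<^sup>2 - int_sq wx t"
    using integral_by_parts_within[OF L deriv(1,2) cont(2,4)] bcl bc0 assms
    by (simp add: int_sq_def power2_eq_square)
  have w_wx: "integral {0..l t} (\<lambda>x. w x t * wx x t) = - (w 0 t)\<^sup>2 / 2"
    using integral_by_parts_within[OF L deriv(1,1) cont(2,2)] bcl assms
    by (simp add: power2_eq_square mult.commute)
  have wt_eq: "(\<lambda>x. w x t * wt x t)
      = (\<lambda>x. D * (w x t * wxx x t) - a * (w x t * wx x t) - g * (w x t)\<^sup>2 - w x t * forcing x t)"
    by (simp add: fun_eq_iff forcing_def algebra_simps power2_eq_square)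
  have "integral {0..l t} (\<lambda>x. w x t * wt x t) = D * integral {0..l t} (\<lambda>x. w x t * wxx x t)
      - a * integral {0..l t} (\<lambda>x. w x t * wx x t) - g * int_sq w t
      - integral {0..l t} (\<lambda>x. w x t * forcing x t)"
    unfolding int_sq_def wt_eq
    by (intro integral_unique has_integral_diff has_integral_mult_right integrable_integral
        integrable_continuous_real continuous_intros cont)
  then show ?thesis
    unfolding w_wxx w_wx by (simp add: algebra_simps)
qed

lemma integral_wx_wxt:
  assumes "t \<ge> 0"
  shows "integral {0..l t} (\<lambda>x. wx x t * wxt x t)
    = - ldot t * (wx (l t) t)\<^sup>2 - gam * w 0 t * wt 0 t - D * int_sq wxx t
      + a / 2 * ((wx (l t) t)\<^sup>2 - gam\<^sup>2 * (w 0 t)\<^sup>2) - g * (gam * (w 0 t)\<^sup>2 + int_sq wx t)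
      + integral {0..l t} (\<lambda>x. wxx x t * forcing x t)"
proof -
  have L: "0 \<le> l t"
    using l_pos assms by (simp add: less_imp_le)
  note cont = slice_continuous[OF assms] and deriv = slice_derivatives[OF assms]
  have wx_wxx: "integral {0..l t} (\<lambda>x. wx x t * wxx x t) = ((wx (l t) t)\<^sup>2 - gam\<^sup>2 * (w 0 t)\<^sup>2) / 2"
    using integral_by_parts_within[OF L deriv(2,2) cont(4,4)] bc0 assms
    by (simp add: power2_eq_square mult.commute)
  have w_wxx: "integral {0..l t} (\<lambda>x. w x t * wxx x t) = - gam * (w 0 t)\<^sup>2 - int_sq wx t"
    using integral_by_parts_within[OF L deriv(1,2) cont(2,4)] bcl bc0 assms
    by (simp add: int_sq_def power2_eq_square)
  have wt_eq: "(\<lambda>x. wxx x t * wt x t)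
      = (\<lambda>x. D * (wxx x t)\<^sup>2 - a * (wx x t * wxx x t) - g * (w x t * wxx x t) - wxx x t * forcing x t)"
    by (simp add: fun_eq_iff forcing_def algebra_simps power2_eq_square)
  have "integral {0..l t} (\<lambda>x. wx x t * wxt x t)
      = wx (l t) t * wt (l t) t - wx 0 t * wt 0 t - integral {0..l t} (\<lambda>x. wxx x t * wt x t)"
    by (rule integral_by_parts_within[OF L deriv(2,3) cont(4,5)])
  also have "integral {0..l t} (\<lambda>x. wxx x t * wt x t) = D * int_sq wxx t - a * integral {0..l t} (\<lambda>x. wx x t * wxx x t)
      - g * integral {0..l t} (\<lambda>x. w x t * wxx x t) - integral {0..l t} (\<lambda>x. wxx x t * forcing x t)"
    unfolding int_sq_def wt_eq
    by (intro integral_unique has_integral_diff has_integral_mult_right integrable_integral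
        integrable_continuous_real continuous_intros cont)
  finally show ?thesis
    unfolding wx_wxx w_wxx using wt_at_boundary[OF assms] bc0 assms
    by (simp add: field_simps power2_eq_square)
qed

lemma wx_boundary_sq_le:
  assumes "t \<ge> 0" and "\<epsilon> > 0"
  shows "(wx (l t) t)\<^sup>2 \<le> gam\<^sup>2 * (w 0 t)\<^sup>2 + int_sq wx t / \<epsilon> + \<epsilon> * int_sq wxx t"
proof -
  have L: "0 \<le> l t"
    using l_pos assms by (simp add: less_imp_le)
  note cont = slice_continuous[OF assms(1)] and deriv = slice_derivatives[OF assms(1)]
  have "(wx (l t) t)\<^sup>2 - (wx 0 t)\<^sup>2 = 2 * integral {0..l t} (\<lambda>x. wx x t * wxx x t)"
    using integral_by_parts_within[OF L deriv(2,2) cont(4,4)]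
    by (simp add: power2_eq_square mult.commute)
  also have "\<dots> \<le> integral {0..l t} (\<lambda>x. (wx x t)\<^sup>2 / \<epsilon> + \<epsilon> * (wxx x t)\<^sup>2)"
  proof -
    have "2 * (wx x t * wxx x t) \<le> (wx x t)\<^sup>2 / \<epsilon> + \<epsilon> * (wxx x t)\<^sup>2" for x
    proof -
      have "0 \<le> (wx x t - \<epsilon> * wxx x t)\<^sup>2 / \<epsilon>"
        using assms(2) by simp
      also have "\<dots> = (wx x t)\<^sup>2 / \<epsilon> + \<epsilon> * (wxx x t)\<^sup>2 - 2 * (wx x t * wxx x t)"
        using assms(2) by (simp add: field_simps power2_eq_square)
      finally show ?thesis
        by simp
    qed
    then show ?thesis
      by (subst integral_mult_right[symmetric], intro integral_le integrable_continuous_real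
          continuous_intros cont) (use assms(2) in auto)
  qed
  also have "\<dots> = int_sq wx t / \<epsilon> + \<epsilon> * int_sq wxx t"
    unfolding int_sq_def
    by (intro integral_unique has_integral_add has_integral_mult_right has_integral_divide
        integrable_integral integrable_continuous_real continuous_intros cont)
  finally show ?thesis
    using bc0 assms(1) by (simp add: power_mult_distrib)
qed

lemma int_sq_has_derivative:
  assumes "t \<ge> 0"
    and f_t: "\<And>x s. (x, s) \<in> U \<Longrightarrow> ((\<lambda>s. f x s) has_real_derivative ft x s) (at s)"
    and f_cont: "continuous_on U (\<lambda>(x, s). f x s)" and ft_cont: "continuous_on U (\<lambda>(x, s). ft x s)"
  shows "(int_sq f has_real_derivative 2 * integral {0..l t} (\<lambda>x. f x t * ft x t) + (f (l t) t)\<^sup>2 * ldot t)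
    (at t within {0..})"
proof -
  obtain \<delta> where "\<delta> > 0" and B: "{0..l t + \<delta>} \<times> {t-\<delta>..t+\<delta>} \<subseteq> U"
    using box_subset_U[OF assms(1)] .
  have "(int_sq f has_real_derivative integral {0..l t} (\<lambda>x. 2 * (f x t * ft x t)) + (f (l t) t)\<^sup>2 * ldot t)
      (at t within {0..})"
    unfolding int_sq_def[abs_def]
  proof (rule has_real_derivative_integral_upper_limit[where ft="\<lambda>x s. 2 * (f x s * ft x s)",
        OF \<open>\<delta> > 0\<close> _ _ _ l_has_derivative[OF assms(1)]])
    fix x s assume "(x, s) \<in> {0..l t + \<delta>} \<times> {t-\<delta>..t+\<delta>}"
    with B have "(x, s) \<in> U"
      by blast
    from DERIV_power[OF f_t[OF this], of 2]
    show "((\<lambda>s. (f x s)\<^sup>2) has_real_derivative 2 * (f x s * ft x s)) (at s)"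
      by (simp add: mult.commute)
  next
    have cont: "continuous_on ({0..l t + \<delta>} \<times> {t-\<delta>..t+\<delta>}) (\<lambda>p. f (fst p) (snd p))"
      "continuous_on ({0..l t + \<delta>} \<times> {t-\<delta>..t+\<delta>}) (\<lambda>p. ft (fst p) (snd p))"
      using continuous_on_subset[OF f_cont B] continuous_on_subset[OF ft_cont B]
      by (simp_all add: case_prod_unfold)
    show "continuous_on ({0..l t + \<delta>} \<times> {t-\<delta>..t+\<delta>}) (\<lambda>(x, s). (f x s)\<^sup>2)"
      "continuous_on ({0..l t + \<delta>} \<times> {t-\<delta>..t+\<delta>}) (\<lambda>(x, s). 2 * (f x s * ft x s))"
      unfolding case_prod_unfold by (intro continuous_intros cont)+
  qed (use assms(1) l_pos in \<open>auto simp: less_imp_le\<close>)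
  then show ?thesis
    by simp
qed

lemma V_has_derivative:
  assumes "t \<ge> 0"
  shows "(V d1 d2 has_real_derivative V_deriv d1 d2 t) (at t within {0..})"
proof -
  have "(0, t) \<in> U"
    using slice_subset_U[OF assms] l_pos assms by (auto simp: less_imp_le)
  from DERIV_power[OF w_t[OF this], of 2]
  have "((\<lambda>s. (w 0 s)\<^sup>2) has_real_derivative 2 * (w 0 t * wt 0 t)) (at t within {0..})"
    by (simp add: mult.commute has_field_derivative_at_within)
  moreover have "((\<lambda>s. X s \<bullet> (P *v X s)) has_real_derivative
      2 * (X t \<bullet> (P *v (Acl *v X t + wx (l t) t *\<^sub>R Bvec beta)))) (at t within {0..})"
    using ode assms P_sym by (intro has_real_derivative_quadratic_form) auto
  ultimately have "(V d1 d2 has_real_derivative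
      d1 / 2 * (2 * integral {0..l t} (\<lambda>x. w x t * wt x t) + (w (l t) t)\<^sup>2 * ldot t)
      + 1 / 2 * (2 * integral {0..l t} (\<lambda>x. wx x t * wxt x t) + (wx (l t) t)\<^sup>2 * ldot t)
      + gam / 2 * (2 * (w 0 t * wt 0 t))
      + d2 * (2 * (X t \<bullet> (P *v (Acl *v X t + wx (l t) t *\<^sub>R Bvec beta))))) (at t within {0..})"
    unfolding V_def[abs_def]
    by (intro DERIV_add DERIV_cmult int_sq_has_derivative[OF assms] w_t wx_t continuous_on_U)
  moreover have lyap_eq: "2 * (X t \<bullet> (P *v (Acl *v X t + wx (l t) t *\<^sub>R Bvec beta)))
      = - (X t \<bullet> (Q *v X t)) + 2 * wx (l t) t * (X t \<bullet> (P *v Bvec beta))"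
    using lyapunov_quadratic_form[OF lyap P_sym, of "X t"]
    by (simp add: matrix_vector_right_distrib inner_add_right matrix_vector_mult_scaleR)
  ultimately show ?thesis
    unfolding lyap_eq integral_w_wt[OF assms] integral_wx_wxt[OF assms] V_deriv_def
    using bcl assms by (simp add: algebra_simps)
qed

lemma int_sq_nonneg: "0 \<le> int_sq f t"
  unfolding int_sq_def
  by (cases "(\<lambda>x. (f x t)\<^sup>2) integrable_on {0..l t}") (simp_all add: integral_nonneg not_integrable_integral)

lemma abs_forcing_le_closed:
  assumes "t \<ge> 0" and bound: "\<And>x. 0 < x \<Longrightarrow> x < l t \<Longrightarrow> \<bar>forcing x t\<bar> \<le> M" and "x \<in> {0..l t}"
  shows "\<bar>forcing x t\<bar> \<le> M"
proof (rule continuous_le_on_closure[where S="{0<..<l t}" and f="\<lambda>x. \<bar>forcing x t\<bar>"])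
  have "0 < l t"
    using l_pos assms(1) by simp
  then show "continuous_on (closure {0<..<l t}) (\<lambda>x. \<bar>forcing x t\<bar>)"
    using slice_continuous(6)[OF assms(1)] by (simp add: continuous_on_rabs)
  show "x \<in> closure {0<..<l t}"
    using \<open>0 < l t\<close> assms(3) by simp
qed (use bound in auto)

lemma integral_w_forcing_ge:
  assumes "t \<ge> 0" and "k \<ge> 0" and bound: "\<And>x. x \<in> {0..l t} \<Longrightarrow> \<bar>forcing x t\<bar> \<le> k * n"
  shows "- integral {0..l t} (\<lambda>x. w x t * forcing x t) \<le> k * (l t * n\<^sup>2 + int_sq w t) / 2"
proof -
  note cont = slice_continuous[OF assms(1)]
  have "- integral {0..l t} (\<lambda>x. w x t * forcing x t) = integral {0..l t} (\<lambda>x. - (w x t * forcing x t))"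
    by simp
  also have "\<dots> \<le> integral {0..l t} (\<lambda>x. k / 2 * n\<^sup>2 + k / 2 * (w x t)\<^sup>2)"
  proof (rule integral_le)
    fix x assume "x \<in> {0..l t}"
    have "- (w x t * forcing x t) \<le> \<bar>w x t\<bar> * \<bar>forcing x t\<bar>"
      by (simp add: abs_mult[symmetric])
    also have "\<dots> \<le> \<bar>w x t\<bar> * (k * n)"
      using bound[OF \<open>x \<in> {0..l t}\<close>] by (intro mult_left_mono) auto
    also have "\<dots> \<le> k / 2 * n\<^sup>2 + k / 2 * (w x t)\<^sup>2"
    proof -
      have "0 \<le> (\<bar>w x t\<bar> - n)\<^sup>2"
        by simp
      then have "\<bar>w x t\<bar> * n \<le> (n\<^sup>2 + (w x t)\<^sup>2) / 2"
        by (simp add: power2_diff)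
      from mult_left_mono[OF this assms(2)] show ?thesis
        by (simp add: algebra_simps)
    qed
    finally show "- (w x t * forcing x t) \<le> k / 2 * n\<^sup>2 + k / 2 * (w x t)\<^sup>2" .
  qed (intro integrable_continuous_real continuous_intros cont)+
  also have "\<dots> = k * (l t * n\<^sup>2 + int_sq w t) / 2"
  proof -
    have "(\<lambda>x. k / 2 * n\<^sup>2) integrable_on {0..l t}" "(\<lambda>x. k / 2 * (w x t)\<^sup>2) integrable_on {0..l t}"
      by (intro integrable_continuous_real continuous_intros cont)+
    moreover have "0 \<le> l t"
      using l_pos assms(1) by (simp add: less_imp_le)
    ultimately show ?thesis
      by (simp add: integral_add int_sq_def algebra_simps)
  qed
  finally show ?thesis .
qed

lemma integral_wxx_forcing_le:
  assumes "t \<ge> 0" and bound: "\<And>x. x \<in> {0..l t} \<Longrightarrow> \<bar>forcing x t\<bar> \<le> M"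
  shows "integral {0..l t} (\<lambda>x. wxx x t * forcing x t) \<le> D / 4 * int_sq wxx t + l t * M\<^sup>2 / D"
proof -
  note cont = slice_continuous[OF assms(1)]
  have "integral {0..l t} (\<lambda>x. wxx x t * forcing x t) \<le> integral {0..l t} (\<lambda>x. D / 4 * (wxx x t)\<^sup>2 + M\<^sup>2 / D)"
  proof (rule integral_le)
    fix x assume "x \<in> {0..l t}"
    have "0 \<le> (D / 2 * wxx x t - forcing x t)\<^sup>2 / D"
      using D_pos by simp
    also have "\<dots> = D / 4 * (wxx x t)\<^sup>2 + (forcing x t)\<^sup>2 / D - wxx x t * forcing x t"
      using D_pos by (simp add: field_simps power2_eq_square)
    finally have "wxx x t * forcing x t \<le> D / 4 * (wxx x t)\<^sup>2 + (forcing x t)\<^sup>2 / D"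
      by simp
    also have "(forcing x t)\<^sup>2 \<le> M\<^sup>2"
      using power_mono[OF bound[OF \<open>x \<in> {0..l t}\<close>] abs_ge_zero, of 2] by simp
    finally show "wxx x t * forcing x t \<le> D / 4 * (wxx x t)\<^sup>2 + M\<^sup>2 / D"
      using D_pos by (simp add: divide_right_mono)
  qed (intro integrable_continuous_real continuous_intros cont)+
  also have "\<dots> = D / 4 * int_sq wxx t + l t * M\<^sup>2 / D"
  proof -
    have "(\<lambda>x. D / 4 * (wxx x t)\<^sup>2) integrable_on {0..l t}" "(\<lambda>x. M\<^sup>2 / D) integrable_on {0..l t}"
      by (intro integrable_continuous_real continuous_intros cont)+
    moreover have "0 \<le> l t"
      using l_pos assms(1) by (simp add: less_imp_le)
    ultimately show ?thesis
      by (simp add: integral_add int_sq_def)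
  qed
  finally show ?thesis .
qed

end

section \<open>The Lyapunov estimate\<close>

lemma cubic_le_powr_three_halves:
  fixes n W V c1 c2 :: real
  assumes "0 \<le> n" "0 \<le> W" "0 < c1" "0 < c2" "c1 * n\<^sup>2 \<le> V" "c2 * W \<le> V"
  shows "n * (n\<^sup>2 + W) \<le> (1 / c1 + 1 / c2) / sqrt c1 * V powr (3 / 2)"
proof -
  have "0 \<le> V"
    using assms(2,4,6) by (smt (verit) mult_nonneg_nonneg)
  have n2: "n\<^sup>2 \<le> V / c1" and W: "W \<le> V / c2"
    using assms(3-6) by (simp_all add: field_simps)
  have "n = sqrt (n\<^sup>2)"
    using assms(1) by simp
  also have "\<dots> \<le> sqrt V / sqrt c1"
    using real_sqrt_le_mono[OF n2] by (simp add: real_sqrt_divide)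
  finally have "n * (n\<^sup>2 + W) \<le> sqrt V / sqrt c1 * (V / c1 + V / c2)"
    using n2 W assms(1,2) by (intro mult_mono add_mono) auto
  also have "\<dots> = (1 / c1 + 1 / c2) / sqrt c1 * (V * sqrt V)"
    by (simp add: field_simps)
  also have "V * sqrt V = V powr (3 / 2)"
  proof -
    have "V powr (3 / 2) = V powr (1 + 1 / 2)"
      by simp
    also have "\<dots> = V * sqrt V"
      unfolding powr_add using \<open>0 \<le> V\<close> by (simp add: powr_half_sqrt)
    finally show ?thesis ..
  qed
  finally show ?thesis .
qed

locale target_system_estimate = target_system +
  fixes lbar cF q pm pM :: real
  assumes g_pos: "g > 0" and rg_pos: "rg > 0" and gam_pos: "gam > 0" and gam_ge: "gam \<ge> a / D"
    and l_le: "\<forall>t\<ge>0. l t \<le> lbar"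
    and ldot_bound: "\<forall>t\<ge>0. \<bar>rg * X t $ 1\<bar> \<le> min (g / (4 * gam)) (D / (8 * lbar))"
    and Ffun_le: "\<forall>L x Z. 0 < x \<and> x < L \<and> L \<le> lbar \<longrightarrow>
      \<bar>Ffun D a g (Amat atil rg) (Bvec beta) (Cvec D a g lc cinf) K L x Z\<bar> \<le> cF * norm Z"
    and cF_pos: "cF > 0"
    and q_pos: "q > 0" and Q_ge: "\<forall>x. q * (norm x)\<^sup>2 \<le> x \<bullet> (Q *v x)"
    and pm_pos: "pm > 0" and P_ge: "\<forall>x. pm * (norm x)\<^sup>2 \<le> x \<bullet> (P *v x)"
    and pM_pos: "pM > 0" and P_le: "\<forall>x. x \<bullet> (P *v x) \<le> pM * (norm x)\<^sup>2"
begin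

text \<open>Beyond bounding \<open>|ldot|\<close>, the particular value of \<open>vbar\<close> plays no role.\<close>

definition vbar :: real where
  "vbar = min (g / (4 * gam)) (D / (8 * lbar))"

text \<open>The \<open>+ 1\<close> keeps \<open>boundary_coeff\<close> positive, so \<open>D / (4 * boundary_coeff)\<close> is a valid weight
  in the trace inequality.\<close>

definition boundary_coeff :: real where
  "boundary_coeff = (\<bar>a\<bar> + vbar) / 2 + 2 * (norm (P *v Bvec beta))\<^sup>2 / q + 1"

definition d1min :: real where
  "d1min = max (4 * boundary_coeff\<^sup>2 / D\<^sup>2) ((\<bar>a\<bar> + 2 * boundary_coeff) * gam / D)"

definition d2max :: "real \<Rightarrow> real" where
  "d2max d1 = min 1 (min (8 * g) (2 * q / pM) / (2 * d1 * D + g))"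

definition cubic_coeff :: "real \<Rightarrow> real" where
  "cubic_coeff d1 = d1 * rg * cF * (lbar + 1) / 2 + lbar * vbar * rg * cF\<^sup>2 / D"

definition beta0 :: "real \<Rightarrow> real \<Rightarrow> real" where
  "beta0 d1 d2 = cubic_coeff d1 / sqrt (d2 * pm) * (1 / (d2 * pm) + 2 / d1)"

lemma lbar_pos: "lbar > 0"
  using l_pos l_le by (metis order.strict_trans2 order_refl)

lemma vbar_pos: "vbar > 0"
  using g_pos gam_pos D_pos lbar_pos by (simp add: vbar_def)

lemma boundary_coeff_pos: "boundary_coeff > 0"
  using vbar_pos q_pos by (simp add: boundary_coeff_def add_pos_nonneg)

lemma d1min_pos: "d1min > 0"
  using boundary_coeff_pos D_pos by (simp add: d1min_def less_max_iff_disj)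

lemma ldot_le:
  assumes "t \<ge> 0"
  shows "\<bar>ldot t\<bar> \<le> vbar" and "\<bar>ldot t\<bar> \<le> rg * norm (X t)"
  using ldot_bound assms rg_pos component_le_norm_cart[of "X t" 1]
  by (auto simp: ldot_def vbar_def abs_mult)

lemma abs_forcing_le:
  assumes "t \<ge> 0" and "x \<in> {0..l t}"
  shows "\<bar>forcing x t\<bar> \<le> \<bar>ldot t\<bar> * cF * norm (X t)"
proof (rule abs_forcing_le_closed[OF assms(1) _ assms(2)])
  fix x assume "0 < x" "x < l t"
  then have "forcing x t = ldot t * Ffun D a g (Amat atil rg) (Bvec beta) (Cvec D a g lc cinf) K (l t) x (X t)"
    using pde assms(1) by (simp add: forcing_def ldot_def)
  then show "\<bar>forcing x t\<bar> \<le> \<bar>ldot t\<bar> * cF * norm (X t)"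
    using Ffun_le l_le assms(1) \<open>0 < x\<close> \<open>x < l t\<close> by (simp add: abs_mult mult.assoc mult_left_mono)
qed

lemma forcing_w_term_le:
  assumes "t \<ge> 0"
  defines "n \<equiv> norm (X t)"
  shows "- integral {0..l t} (\<lambda>x. w x t * forcing x t) \<le> rg * cF * (lbar + 1) / 2 * (n * (n\<^sup>2 + int_sq w t))"
proof -
  define k where "k = \<bar>ldot t\<bar> * cF"
  have "k \<ge> 0" "n \<ge> 0" "int_sq w t \<ge> 0" "0 < l t" "l t \<le> lbar"
    using cF_pos int_sq_nonneg l_pos l_le assms(1) by (auto simp: k_def n_def)
  have "k \<le> rg * cF * n"
    using ldot_le(2)[OF assms(1)] cF_pos by (simp add: k_def n_def mult.commute mult_left_mono)
  have "l t * n\<^sup>2 \<le> lbar * n\<^sup>2" "0 \<le> lbar * int_sq w t"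
    using \<open>l t \<le> lbar\<close> \<open>int_sq w t \<ge> 0\<close> lbar_pos by (auto intro: mult_right_mono)
  then have "l t * n\<^sup>2 + int_sq w t \<le> (lbar + 1) * (n\<^sup>2 + int_sq w t)"
    using zero_le_power2[of n] unfolding distrib_left distrib_right mult_1_left by linarith
  from mult_mono[OF \<open>k \<le> rg * cF * n\<close> this]
  have "k * (l t * n\<^sup>2 + int_sq w t) \<le> rg * cF * n * ((lbar + 1) * (n\<^sup>2 + int_sq w t))"
    using \<open>k \<ge> 0\<close> \<open>0 < l t\<close> \<open>int_sq w t \<ge> 0\<close> rg_pos cF_pos \<open>n \<ge> 0\<close> by simp
  moreover have "rg * cF * (lbar + 1) / 2 * (n * (n\<^sup>2 + int_sq w t))
      = rg * cF * n * ((lbar + 1) * (n\<^sup>2 + int_sq w t)) / 2"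
    by (simp add: field_simps)
  moreover have "- integral {0..l t} (\<lambda>x. w x t * forcing x t) \<le> k * (l t * n\<^sup>2 + int_sq w t) / 2"
    using abs_forcing_le[OF assms(1)] by (intro integral_w_forcing_ge[OF assms(1) \<open>k \<ge> 0\<close>]) (simp add: k_def n_def)
  ultimately show ?thesis
    by linarith
qed

lemma forcing_wxx_term_le:
  assumes "t \<ge> 0"
  defines "n \<equiv> norm (X t)"
  shows "integral {0..l t} (\<lambda>x. wxx x t * forcing x t)
    \<le> D / 4 * int_sq wxx t + lbar * vbar * rg * cF\<^sup>2 / D * (n * (n\<^sup>2 + int_sq w t))"
proof -
  define k where "k = \<bar>ldot t\<bar> * cF"
  have "k \<ge> 0" "n \<ge> 0" "int_sq w t \<ge> 0" "0 < l t" "l t \<le> lbar"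
    using cF_pos int_sq_nonneg l_pos l_le assms(1) by (auto simp: k_def n_def)
  have "k * n \<le> vbar * cF * n" "k * n \<le> rg * cF * n * n"
    using ldot_le[OF assms(1)] cF_pos \<open>n \<ge> 0\<close>
    by (auto simp: k_def n_def mult.commute mult_left_mono mult_right_mono)
  from mult_mono[OF this]
  have "(k * n)\<^sup>2 \<le> vbar * rg * cF\<^sup>2 * (n * n\<^sup>2)"
    using \<open>k \<ge> 0\<close> \<open>n \<ge> 0\<close> vbar_pos cF_pos by (simp add: power2_eq_square algebra_simps)
  also have "\<dots> \<le> vbar * rg * cF\<^sup>2 * (n * (n\<^sup>2 + int_sq w t))"
    using \<open>n \<ge> 0\<close> \<open>int_sq w t \<ge> 0\<close> vbar_pos rg_pos by (intro mult_left_mono) (auto simp: algebra_simps)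
  finally have "l t * (k * n)\<^sup>2 \<le> lbar * (vbar * rg * cF\<^sup>2 * (n * (n\<^sup>2 + int_sq w t)))"
    using \<open>l t \<le> lbar\<close> \<open>0 < l t\<close> \<open>n \<ge> 0\<close> \<open>int_sq w t \<ge> 0\<close> vbar_pos rg_pos by (intro mult_mono) auto
  then have "l t * (k * n)\<^sup>2 / D \<le> lbar * vbar * rg * cF\<^sup>2 / D * (n * (n\<^sup>2 + int_sq w t))"
    using D_pos by (simp add: divide_right_mono mult.assoc)
  moreover have "integral {0..l t} (\<lambda>x. wxx x t * forcing x t) \<le> D / 4 * int_sq wxx t + l t * (k * n)\<^sup>2 / D"
    using abs_forcing_le[OF assms(1)] by (intro integral_wxx_forcing_le[OF assms(1)]) (simp add: k_def n_def)
  ultimately show ?thesis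
    by linarith
qed

lemma forcing_terms_le:
  assumes "t \<ge> 0" and "d1 \<ge> 0"
  defines "n \<equiv> norm (X t)"
  shows "integral {0..l t} (\<lambda>x. wxx x t * forcing x t) - d1 * integral {0..l t} (\<lambda>x. w x t * forcing x t)
    \<le> D / 4 * int_sq wxx t + cubic_coeff d1 * (n * (n\<^sup>2 + int_sq w t))"
proof -
  have "d1 * (- integral {0..l t} (\<lambda>x. w x t * forcing x t))
      \<le> d1 * (rg * cF * (lbar + 1) / 2 * (n * (n\<^sup>2 + int_sq w t)))"
    using forcing_w_term_le[OF assms(1)] assms(2) unfolding n_def by (rule mult_left_mono)
  then show ?thesis
    using forcing_wxx_term_le[OF assms(1)] unfolding n_def cubic_coeff_def by (simp add: algebra_simps)
qed

lemma boundary_terms_le: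
  assumes "t \<ge> 0" and "0 < d2" and "d2 \<le> 1"
  shows "(a - ldot t) / 2 * (wx (l t) t)\<^sup>2 + d2 * (2 * wx (l t) t * (X t \<bullet> (P *v Bvec beta)))
    \<le> (boundary_coeff - 1) * (wx (l t) t)\<^sup>2 + d2 * q / 2 * (norm (X t))\<^sup>2"
proof -
  define y n p where "y = wx (l t) t" and "n = norm (X t)" and "p = norm (P *v Bvec beta)"
  have "p \<ge> 0" "n \<ge> 0"
    by (simp_all add: n_def p_def)
  have "a - ldot t \<le> \<bar>a\<bar> + vbar"
    using ldot_le(1)[OF assms(1)] by linarith
  then have lin: "(a - ldot t) / 2 * y\<^sup>2 \<le> (\<bar>a\<bar> + vbar) / 2 * y\<^sup>2"
    by (intro mult_right_mono divide_right_mono) auto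
  have "2 * y * (X t \<bullet> (P *v Bvec beta)) \<le> 2 * \<bar>y\<bar> * \<bar>X t \<bullet> (P *v Bvec beta)\<bar>"
    by (simp add: abs_mult[symmetric] mult.assoc)
  also have "\<dots> \<le> 2 * \<bar>y\<bar> * (n * p)"
    using Cauchy_Schwarz_ineq2[of "X t" "P *v Bvec beta"] by (intro mult_left_mono) (auto simp: n_def p_def)
  also have "\<dots> \<le> 2 * p\<^sup>2 / q * y\<^sup>2 + q / 2 * n\<^sup>2"
  proof -
    have "0 \<le> (2 * p * \<bar>y\<bar> - q * n)\<^sup>2 / (2 * q)"
      using q_pos by simp
    also have "\<dots> = 2 * p\<^sup>2 / q * y\<^sup>2 + q / 2 * n\<^sup>2 - 2 * \<bar>y\<bar> * (n * p)"
      using q_pos by (simp add: field_simps power2_eq_square)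
    finally show ?thesis
      by simp
  qed
  finally have "d2 * (2 * y * (X t \<bullet> (P *v Bvec beta))) \<le> d2 * (2 * p\<^sup>2 / q * y\<^sup>2 + q / 2 * n\<^sup>2)"
    using assms(2) by (intro mult_left_mono) auto
  moreover have "d2 * (2 * p\<^sup>2 / q * y\<^sup>2) \<le> 2 * p\<^sup>2 / q * y\<^sup>2"
    using assms(2,3) q_pos by (intro mult_left_le_one_le) auto
  ultimately have young: "d2 * (2 * y * (X t \<bullet> (P *v Bvec beta))) \<le> 2 * p\<^sup>2 / q * y\<^sup>2 + d2 * q / 2 * n\<^sup>2"
    by (simp add: distrib_left)
  have "boundary_coeff - 1 = (\<bar>a\<bar> + vbar) / 2 + 2 * p\<^sup>2 / q"
    by (simp add: boundary_coeff_def p_def)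
  then have "(boundary_coeff - 1) * y\<^sup>2 = (\<bar>a\<bar> + vbar) / 2 * y\<^sup>2 + 2 * p\<^sup>2 / q * y\<^sup>2"
    by (simp add: distrib_right)
  with lin young show ?thesis
    unfolding y_def n_def by linarith
qed

lemma boundary_trace_le:
  assumes "t \<ge> 0"
  shows "boundary_coeff * (wx (l t) t)\<^sup>2 \<le> boundary_coeff * gam\<^sup>2 * (w 0 t)\<^sup>2 + 4 * boundary_coeff\<^sup>2 / D * int_sq wx t + D / 4 * int_sq wxx t"
proof -
  have "D / (4 * boundary_coeff) > 0"
    using D_pos boundary_coeff_pos by simp
  from mult_left_mono[OF wx_boundary_sq_le[OF assms this], of boundary_coeff]
  have "boundary_coeff * (wx (l t) t)\<^sup>2
      \<le> boundary_coeff * (gam\<^sup>2 * (w 0 t)\<^sup>2 + int_sq wx t / (D / (4 * boundary_coeff)) + D / (4 * boundary_coeff) * int_sq wxx t)"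
    using boundary_coeff_pos by simp
  also have "\<dots> = boundary_coeff * gam\<^sup>2 * (w 0 t)\<^sup>2 + 4 * boundary_coeff\<^sup>2 / D * int_sq wx t + D / 4 * int_sq wxx t"
    using boundary_coeff_pos D_pos by (simp add: field_simps power2_eq_square)
  finally show ?thesis .
qed

lemma d1min_le:
  assumes "d1 \<ge> d1min"
  shows "4 * boundary_coeff\<^sup>2 / D \<le> d1 * D"
    and "boundary_coeff * gam\<^sup>2 - a / 2 * gam\<^sup>2 + d1 * a / 2 \<le> d1 * D * gam"
proof -
  have "4 * boundary_coeff\<^sup>2 / D\<^sup>2 \<le> d1" and ge2: "(\<bar>a\<bar> + 2 * boundary_coeff) * gam / D \<le> d1"
    using assms by (auto simp: d1min_def)
  then show "4 * boundary_coeff\<^sup>2 / D \<le> d1 * D"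
    using D_pos by (simp add: field_simps power2_eq_square)
  have "a \<le> D * gam"
    using gam_ge D_pos by (simp add: divide_le_eq mult.commute)
  then have "d1 * a \<le> d1 * D * gam"
    using d1min_pos assms by (simp add: mult_left_mono mult.assoc)
  moreover have "(\<bar>a\<bar> + 2 * boundary_coeff) * gam / D * (D * gam) \<le> d1 * (D * gam)"
    using ge2 D_pos gam_pos by (intro mult_right_mono) auto
  moreover have "(\<bar>a\<bar> + 2 * boundary_coeff) * gam / D * (D * gam) = \<bar>a\<bar> * gam\<^sup>2 + 2 * boundary_coeff * gam\<^sup>2"
    using D_pos by (simp add: field_simps power2_eq_square)
  moreover have "- a * gam\<^sup>2 \<le> \<bar>a\<bar> * gam\<^sup>2"
    by (intro mult_right_mono) auto
  ultimately show "boundary_coeff * gam\<^sup>2 - a / 2 * gam\<^sup>2 + d1 * a / 2 \<le> d1 * D * gam"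
    by (simp add: algebra_simps)
qed

lemma V_deriv_le_cubic:
  assumes "t \<ge> 0" and "d1 \<ge> d1min" and "0 < d2" and "d2 \<le> 1"
  defines "n \<equiv> norm (X t)"
  shows "V_deriv d1 d2 t \<le> cubic_coeff d1 * (n * (n\<^sup>2 + int_sq w t))
    - d1 * g * int_sq w t - g * int_sq wx t - g * gam * (w 0 t)\<^sup>2 - d2 * q / 2 * n\<^sup>2"
proof -
  define W Wx Wxx w0 wl I1 I2 qX pbX where "W = int_sq w t" and "Wx = int_sq wx t"
    and "Wxx = int_sq wxx t" and "w0 = w 0 t" and "wl = wx (l t) t"
    and "I1 = integral {0..l t} (\<lambda>x. w x t * forcing x t)"
    and "I2 = integral {0..l t} (\<lambda>x. wxx x t * forcing x t)"
    and "qX = X t \<bullet> (Q *v X t)" and "pbX = X t \<bullet> (P *v Bvec beta)"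
  note defs = W_def Wx_def Wxx_def w0_def wl_def I1_def I2_def qX_def pbX_def n_def
  have "Wxx \<ge> 0" "d1 \<ge> 0"
    using int_sq_nonneg d1min_pos assms(2) by (auto simp: Wxx_def)
  have forcing: "I2 - d1 * I1 \<le> D / 4 * Wxx + cubic_coeff d1 * (n * (n\<^sup>2 + W))"
    using forcing_terms_le[OF assms(1) \<open>d1 \<ge> 0\<close>] by (simp add: defs)
  have boundary: "(a - ldot t) / 2 * wl\<^sup>2 + d2 * (2 * wl * pbX) \<le> (boundary_coeff - 1) * wl\<^sup>2 + d2 * q / 2 * n\<^sup>2"
    using boundary_terms_le[OF assms(1,3,4)] by (simp add: defs)
  have trace: "boundary_coeff * wl\<^sup>2 \<le> boundary_coeff * gam\<^sup>2 * w0\<^sup>2 + 4 * boundary_coeff\<^sup>2 / D * Wx + D / 4 * Wxx"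
    using boundary_trace_le[OF assms(1)] by (simp add: defs)
  have dissipation: "d2 * q * n\<^sup>2 \<le> d2 * qX"
    using Q_ge assms(3) by (simp add: defs mult_left_mono mult.assoc)
  have large_d1: "4 * boundary_coeff\<^sup>2 / D * Wx \<le> d1 * D * Wx"
    "boundary_coeff * gam\<^sup>2 * w0\<^sup>2 - a / 2 * gam\<^sup>2 * w0\<^sup>2 + d1 * a / 2 * w0\<^sup>2 \<le> d1 * D * gam * w0\<^sup>2"
    using mult_right_mono[OF d1min_le(1)[OF assms(2)] int_sq_nonneg[of wx t]]
      mult_right_mono[OF d1min_le(2)[OF assms(2)] zero_le_power2[of w0]]
    by (simp_all add: Wx_def algebra_simps)
  have "V_deriv d1 d2 t = I2 - d1 * I1 + ((a - ldot t) / 2 * wl\<^sup>2 + d2 * (2 * wl * pbX))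
      + d1 * a / 2 * w0\<^sup>2 - d1 * D * gam * w0\<^sup>2 - d1 * D * Wx - d1 * g * W - D * Wxx
      - a / 2 * gam\<^sup>2 * w0\<^sup>2 - g * gam * w0\<^sup>2 - g * Wx - d2 * qX"
    by (simp add: V_deriv_def defs algebra_simps diff_divide_distrib)
  also have "\<dots> \<le> cubic_coeff d1 * (n * (n\<^sup>2 + W)) - d1 * g * W - g * Wx - g * gam * w0\<^sup>2 - d2 * q / 2 * n\<^sup>2"
  proof -
    have "d2 * q / 2 * n\<^sup>2 = d2 * q * n\<^sup>2 / 2" "(boundary_coeff - 1) * wl\<^sup>2 = boundary_coeff * wl\<^sup>2 - wl\<^sup>2"
      "D / 4 * Wxx = D * Wxx / 4" "0 \<le> D * Wxx"
      using D_pos \<open>Wxx \<ge> 0\<close> by (simp_all add: algebra_simps)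
    then show ?thesis
      using forcing boundary trace dissipation large_d1 zero_le_power2[of wl] by linarith
  qed
  finally show ?thesis
    by (simp add: defs)
qed

lemma V_lower_bounds:
  assumes "d1 > 0" and "d2 > 0"
  shows "d2 * pm * (norm (X t))\<^sup>2 \<le> V d1 d2 t" and "d1 / 2 * int_sq w t \<le> V d1 d2 t"
    and "0 \<le> V d1 d2 t"
proof -
  have "d2 * (pm * (norm (X t))\<^sup>2) \<le> d2 * (X t \<bullet> (P *v X t))"
    using P_ge assms(2) by (simp add: mult_left_mono)
  moreover have "0 \<le> d2 * (pm * (norm (X t))\<^sup>2)" "0 \<le> d1 / 2 * int_sq w t"
    "0 \<le> 1 / 2 * int_sq wx t" "0 \<le> gam / 2 * (w 0 t)\<^sup>2"
    using assms pm_pos gam_pos int_sq_nonneg by simp_all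
  ultimately show "d2 * pm * (norm (X t))\<^sup>2 \<le> V d1 d2 t" "d1 / 2 * int_sq w t \<le> V d1 d2 t"
    "0 \<le> V d1 d2 t"
    unfolding V_def by (simp_all add: mult.assoc)
qed

lemma V_le_dissipation:
  assumes "d1 > 0" and "0 < d2" and "d2 \<le> d2max d1"
  shows "d2 * (2 * d1 * D + g) / 4 * V d1 d2 t
    \<le> d1 * g * int_sq w t + g * int_sq wx t + g * gam * (w 0 t)\<^sup>2 + d2 * q / 2 * (norm (X t))\<^sup>2"
proof -
  define \<alpha> where "\<alpha> = d2 * (2 * d1 * D + g) / 4"
  have "2 * d1 * D + g > 0"
    using assms(1) D_pos g_pos by (simp add: add_pos_pos)
  then have "d2 * (2 * d1 * D + g) \<le> min (8 * g) (2 * q / pM)"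
    using assms(3) by (simp add: d2max_def le_divide_eq)
  then have "\<alpha> \<le> 2 * g" "\<alpha> * pM \<le> q / 2"
    using pM_pos by (auto simp: \<alpha>_def field_simps)
  moreover have "\<alpha> \<ge> 0"
    using assms(2) \<open>2 * d1 * D + g > 0\<close> by (simp add: \<alpha>_def)
  ultimately have "\<alpha> * (d1 / 2 * int_sq w t) \<le> d1 * g * int_sq w t"
    "\<alpha> * (1 / 2 * int_sq wx t) \<le> g * int_sq wx t"
    "\<alpha> * (gam / 2 * (w 0 t)\<^sup>2) \<le> g * gam * (w 0 t)\<^sup>2"
    "\<alpha> * (d2 * (X t \<bullet> (P *v X t))) \<le> d2 * q / 2 * (norm (X t))\<^sup>2"
    using mult_right_mono[OF \<open>\<alpha> \<le> 2 * g\<close>, of "d1 / 2 * int_sq w t"]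
      mult_right_mono[OF \<open>\<alpha> \<le> 2 * g\<close>, of "1 / 2 * int_sq wx t"]
      mult_right_mono[OF \<open>\<alpha> \<le> 2 * g\<close>, of "gam / 2 * (w 0 t)\<^sup>2"]
      mult_left_mono[OF P_le[rule_format, of "X t"] \<open>\<alpha> \<ge> 0\<close>]
      mult_right_mono[OF \<open>\<alpha> * pM \<le> q / 2\<close>, of "(norm (X t))\<^sup>2"]
      assms int_sq_nonneg gam_pos
    by (auto simp: algebra_simps intro: mult_left_mono)
  then show ?thesis
    unfolding \<alpha>_def[symmetric] V_def by (simp add: distrib_left)
qed

lemma V_deriv_le:
  assumes "t \<ge> 0" and "d1 \<ge> d1min" and "0 < d2" and "d2 \<le> d2max d1"
  shows "V_deriv d1 d2 t \<le> - (d2 * (2 * d1 * D + g) / 4) * V d1 d2 t + beta0 d1 d2 * V d1 d2 t powr (3 / 2)"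
proof -
  have "d1 > 0" "d2 \<le> 1"
    using assms d1min_pos by (auto simp: d2max_def)
  have "cubic_coeff d1 \<ge> 0"
    using \<open>d1 > 0\<close> rg_pos cF_pos lbar_pos vbar_pos D_pos by (simp add: cubic_coeff_def)
  have "norm (X t) * ((norm (X t))\<^sup>2 + int_sq w t)
      \<le> (1 / (d2 * pm) + 1 / (d1 / 2)) / sqrt (d2 * pm) * V d1 d2 t powr (3 / 2)"
    using V_lower_bounds[OF \<open>d1 > 0\<close> assms(3)] assms(3) pm_pos \<open>d1 > 0\<close>
    by (intro cubic_le_powr_three_halves) (auto simp: int_sq_nonneg)
  from mult_left_mono[OF this \<open>cubic_coeff d1 \<ge> 0\<close>]
  have "cubic_coeff d1 * (norm (X t) * ((norm (X t))\<^sup>2 + int_sq w t)) \<le> beta0 d1 d2 * V d1 d2 t powr (3 / 2)"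
    by (simp add: beta0_def)
  then show ?thesis
    using V_deriv_le_cubic[OF assms(1,2,3) \<open>d2 \<le> 1\<close>] V_le_dissipation[OF \<open>d1 > 0\<close> assms(3,4), of t]
    by linarith
qed

lemma d2max_pos: "d1 > 0 \<Longrightarrow> d2max d1 > 0"
  using g_pos q_pos pM_pos D_pos by (simp add: d2max_def add_pos_pos)

lemma beta0_pos: "d1 > 0 \<Longrightarrow> d2 > 0 \<Longrightarrow> beta0 d1 d2 > 0"
  using rg_pos cF_pos lbar_pos vbar_pos D_pos pm_pos
  by (simp add: beta0_def cubic_coeff_def add_pos_pos add_pos_nonneg)

lemma V_altdef:
  "V d1 d2 = (\<lambda>s. d1 / 2 * integral {0 .. l s} (\<lambda>x. (w x s)\<^sup>2)
      + 1 / 2 * integral {0 .. l s} (\<lambda>x. (wx x s)\<^sup>2) + gam / 2 * (w 0 s)\<^sup>2 + d2 * (X s \<bullet> (P *v X s)))"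
  by (simp add: fun_eq_iff V_def int_sq_def)

lemma Lyapunov_estimate:
  assumes "t \<ge> 0" and "d1 \<ge> d1min" and "0 < d2" and "d2 \<le> d2max d1"
  shows "\<exists>V'. (V d1 d2 has_real_derivative V') (at t within {0..}) \<and>
    V' \<le> - Min {2 * g + D / (4 * lbar), (4 * g + d1 * D) / 2, lambda_min Q / (2 * lambda_max P),
      d2 * (2 * d1 * D + g) / 4} * V d1 d2 t + beta0 d1 d2 * V d1 d2 t powr (3 / 2)"
proof -
  have "Min {2 * g + D / (4 * lbar), (4 * g + d1 * D) / 2, lambda_min Q / (2 * lambda_max P),
      d2 * (2 * d1 * D + g) / 4} \<le> d2 * (2 * d1 * D + g) / 4"
    by (rule Min_le) auto
  then have "- (d2 * (2 * d1 * D + g) / 4) * V d1 d2 t \<le> - Min {2 * g + D / (4 * lbar),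
      (4 * g + d1 * D) / 2, lambda_min Q / (2 * lambda_max P), d2 * (2 * d1 * D + g) / 4} * V d1 d2 t"
    using V_lower_bounds(3)[of d1 d2 t] d1min_pos assms by (intro mult_right_mono) auto
  then show ?thesis
    using V_has_derivative[OF assms(1), of d1 d2] V_deriv_le[OF assms] by fastforce
qed

end

theorem lemma1:
  fixes D a g rg lc cinf atil beta ls gam lbar :: real
    and K :: "real^2" and P Q :: "real^2^2"
    and X :: "real \<Rightarrow> real^2" and l :: "real \<Rightarrow> real"
    and w wx wt wxx wxt :: "real \<Rightarrow> real \<Rightarrow> real"
    and U :: "(real \<times> real) set"
  assumes D_pos: "D > 0" and g_pos: "g > 0" and rg_pos: "rg > 0" and lc_pos: "lc > 0"
    and cinf_pos: "cinf > 0" and ls_pos: "ls > 0" and gam_pos: "gam > 0"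
    and gam_ge: "gam \<ge> a / D" and lbar_gt: "lbar > ls"
    and K_hurwitz: "hurwitz (Amat atil rg + outer (Bvec beta) K)"
    and P_pd: "pos_def P" and Q_pd: "pos_def Q"
    and lyap: "transpose (Amat atil rg + outer (Bvec beta) K) ** P + P ** (Amat atil rg + outer (Bvec beta) K) = - Q"
    \<comment> \<open>the moving boundary l(t) = l_s + z_2(t)\<close>
    and l_def: "\<forall>t. l t = ls + X t $ 2"
    \<comment> \<open>classical regularity: w, w_x are C^1 on an open set containing the closed domain\<close>
    and U_open: "open U"
    and U_dom: "{(x, t). 0 \<le> t \<and> 0 \<le> x \<and> x \<le> l t} \<subseteq> U"
    and w_deriv: "\<forall>p\<in>U. ((\<lambda>q. w (fst q) (snd q)) has_derivative
                      (\<lambda>h. wx (fst p) (snd p) * fst h + wt (fst p) (snd p) * snd h)) (at p)"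
    and wx_deriv: "\<forall>p\<in>U. ((\<lambda>q. wx (fst q) (snd q)) has_derivative
                      (\<lambda>h. wxx (fst p) (snd p) * fst h + wxt (fst p) (snd p) * snd h)) (at p)"
    and wt_cont: "continuous_on U (\<lambda>q. wt (fst q) (snd q))"
    and wxx_cont: "continuous_on U (\<lambda>q. wxx (fst q) (snd q))"
    and wxt_cont: "continuous_on U (\<lambda>q. wxt (fst q) (snd q))"
    \<comment> \<open>the target system (with \<dot>l(t) = r_g z_1(t))\<close>
    and pde: "\<forall>t\<ge>0. \<forall>x. 0 < x \<and> x < l t \<longrightarrow>
                wt x t = D * wxx x t - a * wx x t - g * w x t
                  - (rg * X t $ 1) * Ffun D a g (Amat atil rg) (Bvec beta) (Cvec D a g lc cinf) K (l t) x (X t)"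
    and bc0: "\<forall>t\<ge>0. wx 0 t = gam * w 0 t"
    and bcl: "\<forall>t\<ge>0. w (l t) t = 0"
    and ode: "\<forall>t\<ge>0. (X has_vector_derivative
                ((Amat atil rg + outer (Bvec beta) K) *v X t + wx (l t) t *\<^sub>R Bvec beta)) (at t within {0..})"
    \<comment> \<open>a priori bounds\<close>
    and l_bounds: "\<forall>t\<ge>0. 0 < l t \<and> l t \<le> lbar"
    and ldot_bound: "\<forall>t\<ge>0. \<bar>rg * X t $ 1\<bar> \<le> min (g / (4 * gam)) (D / (8 * lbar))"
  shows "\<exists>d1min. \<forall>d1. d1 > 0 \<and> d1 \<ge> d1min \<longrightarrow>
           (\<exists>d2max > 0. \<forall>d2. 0 < d2 \<and> d2 \<le> d2max \<longrightarrow>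
             (\<exists>beta0 > 0. \<forall>t\<ge>0.
                let V = (\<lambda>s. d1 / 2 * integral {0 .. l s} (\<lambda>x. (w x s)\<^sup>2)
                           + 1 / 2 * integral {0 .. l s} (\<lambda>x. (wx x s)\<^sup>2)
                           + gam / 2 * (w 0 s)\<^sup>2 + d2 * (X s \<bullet> (P *v X s)));
                    alpha = Min {2 * g + D / (4 * lbar), (4 * g + d1 * D) / 2,
                                 lambda_min Q / (2 * lambda_max P), d2 * (2 * d1 * D + g) / 4}
                in \<exists>V'. (V has_real_derivative V') (at t within {0..}) \<and>
                        V' \<le> - alpha * V t + beta0 * V t powr (3 / 2)))"
proof -
  obtain cF where "cF > 0" and cF: "\<forall>L x Z. 0 < x \<and> x < L \<and> L \<le> lbar \<longrightarrow>
      \<bar>Ffun D a g (Amat atil rg) (Bvec beta) (Cvec D a g lc cinf) K L x Z\<bar> \<le> cF * norm Z"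
    using Ffun_bounded by blast
  obtain q where "q > 0" and q: "\<forall>x. q * (norm x)\<^sup>2 \<le> x \<bullet> (Q *v x)"
    using pos_def_quadratic_form_ge[OF Q_pd] by blast
  obtain pm where "pm > 0" and pm: "\<forall>x. pm * (norm x)\<^sup>2 \<le> x \<bullet> (P *v x)"
    using pos_def_quadratic_form_ge[OF P_pd] by blast
  obtain pM where "pM > 0" and pM: "\<forall>x. x \<bullet> (P *v x) \<le> pM * (norm x)\<^sup>2"
    using quadratic_form_le by blast
  interpret target_system_estimate D a g rg atil beta gam ls lc cinf K P Q X l w wx wt wxx wxt U
      lbar cF q pm pM
    using assms \<open>cF > 0\<close> cF \<open>q > 0\<close> q \<open>pm > 0\<close> pm \<open>pM > 0\<close> pM
    by unfold_locales (auto simp: pos_def_def)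
  show ?thesis
    unfolding Let_def V_altdef[symmetric]
    apply (rule exI[of _ d1min], intro allI impI)
    subgoal for d1
      apply (rule exI[of _ "d2max d1"], intro conjI allI impI d2max_pos)
       apply simp
      subgoal for d2
        by (rule exI[of _ "beta0 d1 d2"], intro conjI allI impI beta0_pos Lyapunov_estimate) auto
      done
    done
qed

end
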